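(* Let $d\in\mathbb{N}$, let $\mathcal{H}$ be a separable Hilbert space, $\Lambda\simeq\mathbb{Z}^d\subset\mathbb{R}^d$ a lattice, and $\{P(k)\}_{k\in\mathbb{R}^d}$ a family of orthogonal projectors on $\mathcal{H}$ of finite rank $m$ satisfying (P1)–(P4) below. Let $\Phi=(\phi_1,\dots,\phi_m):\mathbb{R}^d\to\mathcal{H}^m$ be a map such that for every $k$, $\{\phi_a(k)\}$ is an orthonormal basis of $\operatorname{Ran}P(k)$, each $\phi_a$ is continuous, $\phi_a(k+\lambda)=\tau_\lambda\phi_a(k)$ and $\phi_a(-k)=\Theta\phi_a(k)$ for all $k\in\mathbb{R}^d$, $\lambda\in\Lambda$, $a$. Then for every $\varepsilon>0$ there exists $\Phi_{\rm sm}=(\psi_1,\dots,\psi_m):\mathbb{R}^d\to\mathcal{H}^m$ with the same properties (orthonormal basis of $\operatorname{Ran}P(k)$ for every $k$, $\tau$-equivariance, time-reversal invariance) and in addition each $\psi_a$ is $C^\infty$-smooth, such that $\sup_{k\in\mathbb{R}^d}\big(\sum_{a=1}^m\|\phi_a(k)-\psi_a(k)\|_{\mathcal{H}}^2\big)^{1/2}<\varepsilon$.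
   Context: (P1) $k\mapsto P(k)\in\mathcal{B}(\mathcal{H})$ is $C^\infty$-smooth in operator norm. (P2) $\tau:\Lambda\to\mathcal{U}(\mathcal{H})$, $\lambda\mapsto\tau_\lambda$, is a unitary representation with $P(k+\lambda)=\tau_\lambda P(k)\tau_\lambda^{-1}$. (P3) $\Theta$ is an antiunitary operator on $\mathcal{H}$ (surjective antilinear with $\langle\Theta\phi,\Theta\psi\rangle=\langle\psi,\phi\rangle$) with $P(-k)=\Theta P(k)\Theta^{-1}$ and $\Theta^2=\mathrm{Id}$. (P4) $\Theta\tau_\lambda=\tau_\lambda^{-1}\Theta$ for all $\lambda\in\Lambda$. *)

theory Defs
  imports "HOL-Analysis.Analysis"
begin

text \<open>A complex inner product space: a real inner product space carrying a complex
scalar multiplication compatible with the real one, and a complex inner product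
(antilinear in the first argument, physics convention) whose real part is the real
inner product; hence the norm is the Hilbert norm sqrt (Re (cinner x x)).
A complex Hilbert space is then a type of class complex_inner_space and complete_space.\<close>

class complex_inner_space = real_inner +
  fixes scaleC :: "complex \<Rightarrow> 'a \<Rightarrow> 'a" (infixr "*\<^sub>C" 75)
    and cinner :: "'a \<Rightarrow> 'a \<Rightarrow> complex"
  assumes scaleC_add_right: "a *\<^sub>C (x + y) = a *\<^sub>C x + a *\<^sub>C y"
    and scaleC_add_left: "(a + b) *\<^sub>C x = a *\<^sub>C x + b *\<^sub>C x"
    and scaleC_scaleC: "a *\<^sub>C (b *\<^sub>C x) = (a * b) *\<^sub>C x"
    and scaleC_one: "1 *\<^sub>C x = x"
    and scaleR_scaleC: "r *\<^sub>R x = complex_of_real r *\<^sub>C x"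
    and cinner_commute: "cinner x y = cnj (cinner y x)"
    and cinner_add_left: "cinner (x + y) z = cinner x z + cinner y z"
    and cinner_scaleC_left: "cinner (a *\<^sub>C x) y = cnj a * cinner x y"
    and inner_cinner: "inner x y = Re (cinner x y)"

definition separable_space :: "'a::topological_space itself \<Rightarrow> bool" where
  "separable_space _ \<longleftrightarrow> (\<exists>D::'a set. countable D \<and> closure D = UNIV)"

definition clinear :: "('a::complex_inner_space \<Rightarrow> 'b::complex_inner_space) \<Rightarrow> bool" where
  "clinear T \<longleftrightarrow> (\<forall>x y. T (x + y) = T x + T y) \<and> (\<forall>c x. T (c *\<^sub>C x) = c *\<^sub>C T x)"

definition antilinear :: "('a::complex_inner_space \<Rightarrow> 'b::complex_inner_space) \<Rightarrow> bool" where
  "antilinear T \<longleftrightarrow> (\<forall>x y. T (x + y) = T x + T y) \<and> (\<forall>c x. T (c *\<^sub>C x) = cnj c *\<^sub>C T x)"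

definition orth_projector :: "('h::complex_inner_space \<Rightarrow>\<^sub>L 'h) \<Rightarrow> bool" where
  "orth_projector P \<longleftrightarrow> clinear (blinfun_apply P)
     \<and> (\<forall>x. P (P x) = P x) \<and> (\<forall>x y. cinner (P x) y = cinner x (P y))"

definition unitary_op :: "('h::complex_inner_space \<Rightarrow> 'h) \<Rightarrow> bool" where
  "unitary_op U \<longleftrightarrow> clinear U \<and> surj U \<and> (\<forall>x y. cinner (U x) (U y) = cinner x y)"

definition antiunitary_op :: "('h::complex_inner_space \<Rightarrow> 'h) \<Rightarrow> bool" where
  "antiunitary_op T \<longleftrightarrow> antilinear T \<and> surj T \<and> (\<forall>x y. cinner (T x) (T y) = cinner y x)"

definition cspan :: "'a::complex_inner_space set \<Rightarrow> 'a set" where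
  "cspan S = {x. \<exists>F c. finite F \<and> F \<subseteq> S \<and> x = (\<Sum>v\<in>F. c v *\<^sub>C v)}"

definition cdependent :: "'a::complex_inner_space set \<Rightarrow> bool" where
  "cdependent S \<longleftrightarrow> (\<exists>F c v. finite F \<and> F \<subseteq> S \<and> v \<in> F \<and> c v \<noteq> 0 \<and> (\<Sum>w\<in>F. c w *\<^sub>C w) = 0)"

definition has_cdim :: "'a::complex_inner_space set \<Rightarrow> nat \<Rightarrow> bool" where
  "has_cdim V n \<longleftrightarrow> (\<exists>B. finite B \<and> card B = n \<and> \<not> cdependent B \<and> cspan B = V)"

definition is_lattice :: "(real^'d) set \<Rightarrow> bool" where
  "is_lattice L \<longleftrightarrow> (\<exists>B :: real^'d^'d. invertible B \<and>
      L = range (\<lambda>n :: 'd \<Rightarrow> int. B *v (\<chi> i. real_of_int (n i))))"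

definition unitary_rep :: "(real^'d) set \<Rightarrow> (real^'d \<Rightarrow> 'h::complex_inner_space \<Rightarrow> 'h) \<Rightarrow> bool" where
  "unitary_rep L tau \<longleftrightarrow> (\<forall>l\<in>L. unitary_op (tau l)) \<and> tau 0 = id
     \<and> (\<forall>l\<in>L. \<forall>l'\<in>L. tau (l + l') = tau l \<circ> tau l')"

text \<open>C^\<infinity>-smoothness on the whole of a finite dimensional space: all iterated partial
derivatives exist and are (Frechet) differentiable everywhere (hence continuous).\<close>
inductive_set iter_partials :: "('a::euclidean_space \<Rightarrow> 'b::real_normed_vector) \<Rightarrow> ('a \<Rightarrow> 'b) set"
  for f where
  base: "f \<in> iter_partials f"
| step: "g \<in> iter_partials f \<Longrightarrow> i \<in> Basis \<Longrightarrow> (\<lambda>x. frechet_derivative g (at x) i) \<in> iter_partials f"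

definition smooth_fun :: "('a::euclidean_space \<Rightarrow> 'b::real_normed_vector) \<Rightarrow> bool" where
  "smooth_fun f \<longleftrightarrow> (\<forall>g\<in>iter_partials f. \<forall>x. g differentiable (at x))"

definition is_onb_frame :: "(real^'d \<Rightarrow> 'h \<Rightarrow>\<^sub>L 'h) \<Rightarrow> nat \<Rightarrow> (nat \<Rightarrow> real^'d \<Rightarrow> 'h::complex_inner_space) \<Rightarrow> real^'d \<Rightarrow> bool" where
  "is_onb_frame P m Phi k \<longleftrightarrow>
     (\<forall>a\<in>{1..m}. \<forall>b\<in>{1..m}. cinner (Phi a k) (Phi b k) = (if a = b then 1 else 0))
     \<and> cspan ((\<lambda>a. Phi a k) ` {1..m}) = range (blinfun_apply (P k))"

end

theory Submission
  imports Defs "HOL-Computational_Algebra.Polynomial"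
begin

text \<open>Average the given frame over a fine grid adapted to the lattice, with weights given by a smooth
bump function of the grid coordinates: the grid is invariant under lattice translations and under
\<open>k \<mapsto> -k\<close>, so the average inherits the \<open>\<tau>\<close>-equivariance and time-reversal symmetry of the frame,
and by uniform continuity it is uniformly close to the frame after normalisation. Projecting with
\<open>P(k)\<close> and applying Gram--Schmidt, which commutes with unitary and antiunitary maps and is stable
under small perturbations of an orthonormal family, yields a smooth symmetric orthonormal frame
close to the original one.\<close>

section \<open>Smooth functions\<close>

definition partial_deriv :: "('a::euclidean_space \<Rightarrow> 'b::real_normed_vector) \<Rightarrow> 'a \<Rightarrow> 'a \<Rightarrow> 'b" where
  "partial_deriv f i = (\<lambda>x. frechet_derivative f (at x) i)"

lemma smooth_fun_differentiable: "smooth_fun f \<Longrightarrow> f differentiable (at x)"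
  unfolding smooth_fun_def using iter_partials.base by blast

lemma smooth_fun_has_derivative:
  "smooth_fun f \<Longrightarrow> (f has_derivative frechet_derivative f (at x)) (at x)"
  using smooth_fun_differentiable frechet_derivative_works by blast

lemma iter_partials_partial_deriv:
  "g \<in> iter_partials (partial_deriv f i) \<Longrightarrow> i \<in> Basis \<Longrightarrow> g \<in> iter_partials f"
proof (induction g rule: iter_partials.induct)
  case base
  then show ?case unfolding partial_deriv_def by (intro iter_partials.step iter_partials.base)
next
  case (step g j)
  then show ?case by (intro iter_partials.step) auto
qed

lemma smooth_fun_partial_deriv: "smooth_fun f \<Longrightarrow> i \<in> Basis \<Longrightarrow> smooth_fun (partial_deriv f i)"
  unfolding smooth_fun_def using iter_partials_partial_deriv by blast

lemma smooth_fun_coinduct: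
  assumes "X f"
    and "\<And>g x. X g \<Longrightarrow> g differentiable (at x)"
    and "\<And>g i. X g \<Longrightarrow> i \<in> Basis \<Longrightarrow> X (partial_deriv g i)"
  shows "smooth_fun f"
proof -
  have "X g" if "g \<in> iter_partials f" for g
    using that
  proof (induction g rule: iter_partials.induct)
    case base then show ?case using assms(1) .
  next
    case (step g i) then show ?case using assms(3)[of g i] unfolding partial_deriv_def by auto
  qed
  then show ?thesis unfolding smooth_fun_def using assms(2) by blast
qed

lemma partial_deriv_eq:
  "(\<And>x. (f has_derivative D x) (at x)) \<Longrightarrow> partial_deriv f i = (\<lambda>x. D x i)"
  unfolding partial_deriv_def using frechet_derivative_at by metis

lemma partial_deriv_add:
  assumes "\<And>x. f differentiable (at x)" and "\<And>x. g differentiable (at x)"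
  shows "partial_deriv (\<lambda>x. f x + g x) i = (\<lambda>x. partial_deriv f i x + partial_deriv g i x)"
  by (rule partial_deriv_eq[where D="\<lambda>x h. frechet_derivative f (at x) h + frechet_derivative g (at x) h", THEN trans])
    (use assms in \<open>auto intro!: has_derivative_add frechet_derivative_works[THEN iffD1] simp: partial_deriv_def\<close>)

lemma smooth_fun_const: "smooth_fun (\<lambda>x. c)"
  by (rule smooth_fun_coinduct[where X="\<lambda>g. \<exists>c. g = (\<lambda>x. c)"])
     (auto simp: partial_deriv_eq[OF has_derivative_const])

lemma smooth_fun_bounded_linear: "bounded_linear f \<Longrightarrow> smooth_fun f"
proof (rule smooth_fun_coinduct[where X="\<lambda>g. bounded_linear g \<or> (\<exists>c. g = (\<lambda>x. c))"])
  fix g x assume "bounded_linear g \<or> (\<exists>c. g = (\<lambda>x. c))"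
  then show "g differentiable (at x)"
    using bounded_linear_imp_differentiable by auto
next
  fix g :: "'a \<Rightarrow> 'b" and i
  assume "bounded_linear g \<or> (\<exists>c. g = (\<lambda>x. c))"
  then show "bounded_linear (partial_deriv g i) \<or> (\<exists>c. partial_deriv g i = (\<lambda>x. c))"
  proof
    assume "bounded_linear g"
    then have "partial_deriv g i = (\<lambda>x. g i)"
      using partial_deriv_eq bounded_linear_imp_has_derivative by metis
    then show ?thesis by auto
  next
    assume "\<exists>c. g = (\<lambda>x. c)"
    then show ?thesis using partial_deriv_eq[OF has_derivative_const] by auto
  qed
qed simp

lemma smooth_fun_add: "smooth_fun f \<Longrightarrow> smooth_fun g \<Longrightarrow> smooth_fun (\<lambda>x. f x + g x)"
proof (rule smooth_fun_coinduct[where X="\<lambda>h. \<exists>f g. smooth_fun f \<and> smooth_fun g \<and> h = (\<lambda>x. f x + g x)"])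
  fix h x assume "\<exists>f g. smooth_fun f \<and> smooth_fun g \<and> h = (\<lambda>x. f x + g x)"
  then show "h differentiable (at x)" using smooth_fun_differentiable by (auto intro!: differentiable_add)
next
  fix h :: "'a \<Rightarrow> 'b" and i :: 'a
  assume "\<exists>f g. smooth_fun f \<and> smooth_fun g \<and> h = (\<lambda>x. f x + g x)" and i: "i \<in> Basis"
  then obtain f g where fg: "smooth_fun f" "smooth_fun g" "h = (\<lambda>x. f x + g x)" by blast
  have "partial_deriv h i = (\<lambda>x. partial_deriv f i x + partial_deriv g i x)"
    unfolding fg(3) by (intro partial_deriv_add smooth_fun_differentiable fg)
  then show "\<exists>f g. smooth_fun f \<and> smooth_fun g \<and> partial_deriv h i = (\<lambda>x. f x + g x)"
    using smooth_fun_partial_deriv fg i by blast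
qed auto

lemma smooth_fun_compose_bounded_linear:
  fixes L :: "'b::real_normed_vector \<Rightarrow> 'c::real_normed_vector" and f :: "'a::euclidean_space \<Rightarrow> 'b"
  shows "bounded_linear L \<Longrightarrow> smooth_fun f \<Longrightarrow> smooth_fun (\<lambda>x. L (f x))"
proof (rule smooth_fun_coinduct[where X="\<lambda>h. \<exists>f. smooth_fun f \<and> h = (\<lambda>x. L (f x))"])
  fix h x assume L: "bounded_linear L" and "\<exists>f. smooth_fun f \<and> h = (\<lambda>x. L (f x))"
  then obtain f where "smooth_fun f" "h = (\<lambda>x. L (f x))" by blast
  then show "h differentiable (at x)"
    using bounded_linear.has_derivative[OF L smooth_fun_has_derivative] by (auto simp: differentiable_def)
next
  fix h :: "'a \<Rightarrow> 'c" and i :: 'a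
  assume L: "bounded_linear L" and "\<exists>f. smooth_fun f \<and> h = (\<lambda>x. L (f x))" and i: "i \<in> Basis"
  then obtain f where f: "smooth_fun f" "h = (\<lambda>x. L (f x))" by blast
  have "partial_deriv h i = (\<lambda>x. L (partial_deriv f i x))"
    unfolding f(2)
    by (rule partial_deriv_eq[where D="\<lambda>x h. L (frechet_derivative f (at x) h)", THEN trans])
      (auto intro!: bounded_linear.has_derivative[OF L] smooth_fun_has_derivative f simp: partial_deriv_def)
  then show "\<exists>f. smooth_fun f \<and> partial_deriv h i = (\<lambda>x. L (f x))"
    using smooth_fun_partial_deriv f i by blast
qed auto

lemma smooth_fun_sum:
  "finite J \<Longrightarrow> (\<And>j. j \<in> J \<Longrightarrow> smooth_fun (F j)) \<Longrightarrow> smooth_fun (\<lambda>x. \<Sum>j\<in>J. F j x)"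
  by (induction J rule: finite_induct) (simp_all add: smooth_fun_const smooth_fun_add)

lemma smooth_fun_diff: "smooth_fun f \<Longrightarrow> smooth_fun g \<Longrightarrow> smooth_fun (\<lambda>x. f x - g x)"
  using smooth_fun_add[OF _ smooth_fun_compose_bounded_linear[OF bounded_linear_minus[OF bounded_linear_ident]], of f g]
  by simp

text \<open>Sums of products \<open>bp (f x) (g x)\<close> of smooth functions: by the product rule this class is closed
under partial derivatives, which is the coinductive invariant for \<open>smooth_fun_bilinear\<close>.\<close>

inductive_set bilinear_span :: "('b::real_normed_vector \<Rightarrow> 'c::real_normed_vector \<Rightarrow> 'd::real_normed_vector)
     \<Rightarrow> ('a::euclidean_space \<Rightarrow> 'd) set" for bp where
  product: "smooth_fun f \<Longrightarrow> smooth_fun g \<Longrightarrow> (\<lambda>x. bp (f x) (g x)) \<in> bilinear_span bp"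
| add: "h1 \<in> bilinear_span bp \<Longrightarrow> h2 \<in> bilinear_span bp \<Longrightarrow> (\<lambda>x. h1 x + h2 x) \<in> bilinear_span bp"

lemma bilinear_span_derivative:
  assumes B: "bounded_bilinear bp"
  shows "h \<in> bilinear_span bp \<Longrightarrow>
           (\<forall>x. h differentiable (at x)) \<and> (\<forall>i\<in>Basis. partial_deriv h i \<in> bilinear_span bp)"
proof (induction h rule: bilinear_span.induct)
  case (product f g)
  have d: "((\<lambda>x. bp (f x) (g x)) has_derivative
      (\<lambda>h. bp (f x) (frechet_derivative g (at x) h) + bp (frechet_derivative f (at x) h) (g x))) (at x)" for x
    by (rule bounded_bilinear.FDERIV[OF B]) (auto intro: smooth_fun_has_derivative product)
  have "partial_deriv (\<lambda>x. bp (f x) (g x)) i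
          = (\<lambda>x. bp (f x) (partial_deriv g i x) + bp (partial_deriv f i x) (g x))" for i
    by (rule partial_deriv_eq[OF d, THEN trans]) (simp add: partial_deriv_def)
  then show ?case using d product
    by (auto intro!: bilinear_span.intros smooth_fun_partial_deriv simp: differentiable_def)
next
  case (add h1 h2)
  then show ?case by (auto intro!: bilinear_span.intros differentiable_add simp: partial_deriv_add)
qed

lemma smooth_fun_bilinear:
  assumes "bounded_bilinear bp" and "smooth_fun f" and "smooth_fun g"
  shows "smooth_fun (\<lambda>x. bp (f x) (g x))"
  by (rule smooth_fun_coinduct[where X="\<lambda>h. h \<in> bilinear_span bp"])
    (use bilinear_span_derivative assms bilinear_span.product in auto)

lemma smooth_fun_mult: "smooth_fun f \<Longrightarrow> smooth_fun g \<Longrightarrow> smooth_fun (\<lambda>x. f x * (g x :: real))"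
  by (rule smooth_fun_bilinear[OF bounded_bilinear_mult])

lemma smooth_fun_scaleR: "smooth_fun f \<Longrightarrow> smooth_fun g \<Longrightarrow> smooth_fun (\<lambda>x. f x *\<^sub>R g x)"
  by (rule smooth_fun_bilinear[OF bounded_bilinear_scaleR])

lemma smooth_fun_prod:
  "finite J \<Longrightarrow> (\<And>j. j \<in> J \<Longrightarrow> smooth_fun (F j)) \<Longrightarrow> smooth_fun (\<lambda>x. \<Prod>j\<in>J. (F j x :: real))"
  by (induction J rule: finite_induct) (simp_all add: smooth_fun_const smooth_fun_mult)

lemma smooth_fun_local:
  fixes f :: "'a::euclidean_space \<Rightarrow> 'b::real_normed_vector"
  assumes "\<And>x. \<exists>U g. open U \<and> x \<in> U \<and> smooth_fun g \<and> (\<forall>y\<in>U. f y = g y)"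
  shows "smooth_fun f"
proof (rule smooth_fun_coinduct[where X="\<lambda>f. \<forall>x. \<exists>U g. open U \<and> x \<in> U \<and> smooth_fun g \<and> (\<forall>y\<in>U. f y = g y)"])
  have agree: "(h has_derivative frechet_derivative g (at x)) (at x)"
    if "open U" "x \<in> U" "smooth_fun g" "\<forall>y\<in>U. h y = g y" for h g :: "'a \<Rightarrow> 'b" and U x
    by (rule has_derivative_transform_within_open[OF smooth_fun_has_derivative[OF that(3)] that(1,2)])
      (use that(4) in auto)
  {
    fix h :: "'a \<Rightarrow> 'b" and x
    assume "\<forall>x. \<exists>U g. open U \<and> x \<in> U \<and> smooth_fun g \<and> (\<forall>y\<in>U. h y = g y)"
    then show "h differentiable (at x)" using agree by (fastforce simp: differentiable_def)
  next
    fix h :: "'a \<Rightarrow> 'b" and i :: 'a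
    assume H: "\<forall>x. \<exists>U g. open U \<and> x \<in> U \<and> smooth_fun g \<and> (\<forall>y\<in>U. h y = g y)" and i: "i \<in> Basis"
    show "\<forall>x. \<exists>U g. open U \<and> x \<in> U \<and> smooth_fun g \<and> (\<forall>y\<in>U. partial_deriv h i y = g y)"
    proof
      fix x
      obtain U g where U: "open U" "x \<in> U" "smooth_fun g" "\<forall>y\<in>U. h y = g y" using H by blast
      have "partial_deriv h i y = partial_deriv g i y" if y: "y \<in> U" for y
        using frechet_derivative_at[OF agree[OF U(1) y U(3,4)]] smooth_fun_has_derivative[OF U(3)]
        by (simp add: partial_deriv_def frechet_derivative_at[symmetric])
      then show "\<exists>U g. open U \<and> x \<in> U \<and> smooth_fun g \<and> (\<forall>y\<in>U. partial_deriv h i y = g y)"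
        using U smooth_fun_partial_deriv[OF U(3) i] by blast
    qed
  }
qed (use assms in blast)

text \<open>Sums of terms \<open>g x * \<phi> \<iota> (f x)\<close> with \<open>g\<close> smooth: closed under partial derivatives as soon
as the family \<open>\<phi>\<close> is closed under differentiation up to constant factors.\<close>

inductive_set compose_span :: "('i \<Rightarrow> real \<Rightarrow> real) \<Rightarrow> ('a::euclidean_space \<Rightarrow> real) \<Rightarrow> ('a \<Rightarrow> real) set"
  for \<phi> f where
  scaled: "smooth_fun g \<Longrightarrow> (\<lambda>x. g x * \<phi> \<iota> (f x)) \<in> compose_span \<phi> f"
| add: "h1 \<in> compose_span \<phi> f \<Longrightarrow> h2 \<in> compose_span \<phi> f \<Longrightarrow> (\<lambda>x. h1 x + h2 x) \<in> compose_span \<phi> f"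

lemma compose_span_derivative:
  assumes f: "smooth_fun f"
    and D: "\<And>\<iota> x. (\<phi> \<iota> has_real_derivative c \<iota> * \<phi> (\<sigma> \<iota>) (f x)) (at (f x))"
  shows "h \<in> compose_span \<phi> f \<Longrightarrow>
           (\<forall>x. h differentiable (at x)) \<and> (\<forall>i\<in>Basis. partial_deriv h i \<in> compose_span \<phi> f)"
proof (induction h rule: compose_span.induct)
  case (scaled g \<iota>)
  have d: "((\<lambda>x. g x * \<phi> \<iota> (f x)) has_derivative
      (\<lambda>h. g x * (frechet_derivative f (at x) h * (c \<iota> * \<phi> (\<sigma> \<iota>) (f x)))
           + frechet_derivative g (at x) h * \<phi> \<iota> (f x))) (at x)" for x
    by (rule has_derivative_mult[OF smooth_fun_has_derivative[OF scaled]
          DERIV_compose_FDERIV[OF D smooth_fun_has_derivative[OF f]]])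
  have "partial_deriv (\<lambda>x. g x * \<phi> \<iota> (f x)) i
          = (\<lambda>x. (g x * partial_deriv f i x * c \<iota>) * \<phi> (\<sigma> \<iota>) (f x) + partial_deriv g i x * \<phi> \<iota> (f x))" for i
    by (rule partial_deriv_eq[OF d, THEN trans]) (simp add: partial_deriv_def algebra_simps)
  then show ?case using d scaled f
    by (auto intro!: compose_span.intros smooth_fun_partial_deriv smooth_fun_mult smooth_fun_const
        simp: differentiable_def)
next
  case (add h1 h2)
  then show ?case by (auto intro!: compose_span.intros differentiable_add simp: partial_deriv_add)
qed

lemma smooth_fun_compose_family:
  assumes f: "smooth_fun f"
    and D: "\<And>\<iota> x. (\<phi> \<iota> has_real_derivative c \<iota> * \<phi> (\<sigma> \<iota>) (f x)) (at (f x))"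
  shows "smooth_fun (\<lambda>x. \<phi> \<iota> (f x))"
proof -
  have "(\<lambda>x. (\<lambda>x. 1) x * \<phi> \<iota> (f x)) \<in> compose_span \<phi> f" by (rule scaled[OF smooth_fun_const])
  then have "(\<lambda>x. \<phi> \<iota> (f x)) \<in> compose_span \<phi> f" by simp
  then show ?thesis
    by (rule smooth_fun_coinduct[where X="\<lambda>h. h \<in> compose_span \<phi> f"])
      (use compose_span_derivative[where \<phi>=\<phi> and c=c and \<sigma>=\<sigma>, OF f D] in auto)
qed

lemma smooth_fun_powr:
  fixes f :: "'a::euclidean_space \<Rightarrow> real"
  assumes f: "smooth_fun f" and pos: "\<And>x. 0 < f x"
  shows "smooth_fun (\<lambda>x. f x powr r)"
proof -
  have deriv: "((\<lambda>s. s powr r) has_real_derivative r * s powr (r - 1)) (at s)" if "0 < s" for s :: real and r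
    using DERIV_powr[of "\<lambda>s. s" 1 s "\<lambda>_. r" 0] that by (simp add: powr_diff field_simps)
  show ?thesis
    by (rule smooth_fun_compose_family[where \<phi>="\<lambda>r s. s powr r" and c="\<lambda>r. r" and \<sigma>="\<lambda>r. r - 1", OF f])
      (rule deriv[OF pos])
qed

section \<open>A smooth bump function\<close>

definition exp_recip_poly :: "real poly \<Rightarrow> real \<Rightarrow> real" where
  "exp_recip_poly q s = (if s > 0 then poly q (1 / s) * exp (- (1 / s)) else 0)"

text \<open>With \<open>t = 1/s\<close>, the derivative of \<open>q(t) e\<^sup>-\<^sup>t\<close> in \<open>s\<close> is \<open>t\<^sup>2 (q(t) - q'(t)) e\<^sup>-\<^sup>t\<close>.\<close>

definition exp_recip_deriv_poly :: "real poly \<Rightarrow> real poly" where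
  "exp_recip_deriv_poly q = pCons 0 (pCons 0 (q - pderiv q))"

lemma tendsto_poly_times_div_exp:
  fixes q :: "real poly"
  shows "((\<lambda>t. poly q t * t / exp t) \<longlongrightarrow> 0) at_top"
proof -
  have "(\<lambda>t. poly q t * t / exp t) = (\<lambda>t. \<Sum>i\<le>degree q. coeff q i * (t ^ Suc i / exp t))"
    by (simp add: poly_altdef sum_divide_distrib sum_distrib_left mult_ac)
  then show ?thesis
    by (simp only:) (intro tendsto_null_sum tendsto_mult_right_zero tendsto_power_div_exp_0)
qed

lemma exp_recip_poly_div_tendsto_0: "((\<lambda>y. exp_recip_poly q y / y) \<longlongrightarrow> 0) (at_right 0)"
proof -
  have "((\<lambda>y. (\<lambda>t. poly q t * t / exp t) (inverse y)) \<longlongrightarrow> 0) (at_right 0)"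
    by (rule filterlim_compose[OF tendsto_poly_times_div_exp filterlim_inverse_at_top_right])
  moreover have "eventually (\<lambda>y. (\<lambda>t. poly q t * t / exp t) (inverse y) = exp_recip_poly q y / y) (at_right 0)"
    by (rule eventually_at_rightI[where b=1])
      (auto simp: exp_recip_poly_def exp_minus divide_inverse mult_ac)
  ultimately show ?thesis by (rule Lim_transform_eventually)
qed

lemma exp_recip_poly_has_real_derivative:
  "(exp_recip_poly q has_real_derivative exp_recip_poly (exp_recip_deriv_poly q) s) (at s)"
proof (cases s "0::real" rule: linorder_cases)
  case greater
  have d: "((\<lambda>s. poly q (1 / s) * exp (- (1 / s))) has_real_derivative
          (poly (pderiv q) (1/s) * (- 1 / s^2)) * exp (- (1/s)) + poly q (1/s) * (exp (- (1/s)) * (1 / s^2))) (at s)"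
    using greater
    by (auto intro!: derivative_eq_intros DERIV_chain2[OF poly_DERIV] simp: power2_eq_square field_simps)
  have e: "(poly (pderiv q) (1/s) * (- 1 / s^2)) * exp (- (1/s)) + poly q (1/s) * (exp (- (1/s)) * (1 / s^2))
        = exp_recip_poly (exp_recip_deriv_poly q) s"
    using greater
    by (simp add: exp_recip_poly_def exp_recip_deriv_poly_def)
      (simp add: power2_eq_square algebra_simps diff_divide_distrib add_divide_distrib)
  show ?thesis
    by (rule has_field_derivative_transform_within_open[OF d[unfolded e], of "{0<..}"])
      (use greater in \<open>auto simp: exp_recip_poly_def\<close>)
next
  case less
  have "(exp_recip_poly q has_real_derivative 0) (at s)"
    by (rule has_field_derivative_transform_within_open[of "\<lambda>s. 0" 0 s "{..<0}"])
      (use less in \<open>auto simp: exp_recip_poly_def\<close>)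
  then show ?thesis using less by (simp add: exp_recip_poly_def)
next
  case equal
  have "((\<lambda>y. exp_recip_poly q y / y) \<longlongrightarrow> 0) (at_left 0)"
  proof (rule Lim_transform_eventually[rotated])
    show "eventually (\<lambda>y. 0 = exp_recip_poly q y / y) (at_left 0)"
      by (auto simp: exp_recip_poly_def intro!: eventually_at_leftI[where a="-1"])
  qed simp
  then have "((\<lambda>y. (exp_recip_poly q y - exp_recip_poly q 0) / (y - 0)) \<longlongrightarrow> 0) (at 0)"
    using exp_recip_poly_div_tendsto_0 by (simp add: filterlim_at_split exp_recip_poly_def)
  then show ?thesis unfolding equal has_field_derivative_iff by (simp add: exp_recip_poly_def)
qed

lemma smooth_fun_exp_recip_poly: "smooth_fun f \<Longrightarrow> smooth_fun (\<lambda>x. exp_recip_poly q (f x))"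
  using smooth_fun_compose_family[where \<phi>=exp_recip_poly and c="\<lambda>_. 1" and \<sigma>=exp_recip_deriv_poly]
    exp_recip_poly_has_real_derivative by simp

definition bump :: "real \<Rightarrow> real" where "bump t = exp_recip_poly 1 (1 - t\<^sup>2)"

lemma bump_nonneg: "0 \<le> bump t"
  by (simp add: bump_def exp_recip_poly_def)

lemma bump_neq_0_iff: "bump t \<noteq> 0 \<longleftrightarrow> \<bar>t\<bar> < 1"
  by (simp add: bump_def exp_recip_poly_def abs_square_less_1)

lemma bump_minus: "bump (- t) = bump t"
  by (simp add: bump_def)

lemma smooth_fun_bump: "smooth_fun f \<Longrightarrow> smooth_fun (\<lambda>x. bump (f x))"
  unfolding bump_def
  by (intro smooth_fun_exp_recip_poly smooth_fun_diff smooth_fun_const) (simp add: power2_eq_square smooth_fun_mult)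


section \<open>Complex inner product spaces\<close>

lemma scaleC_zero_right [simp]: "(c::complex) *\<^sub>C (0::'a::complex_inner_space) = 0"
  using scaleC_add_right[of c 0 0] by simp

lemma scaleC_minus_right: "(c::complex) *\<^sub>C (- x::'a::complex_inner_space) = - (c *\<^sub>C x)"
  using scaleC_add_right[of c x "-x"] by (simp add: eq_neg_iff_add_eq_0 add.commute)

lemma scaleC_diff_right: "(c::complex) *\<^sub>C (x - y::'a::complex_inner_space) = c *\<^sub>C x - c *\<^sub>C y"
  using scaleC_add_right[of c x "-y"] by (simp add: scaleC_minus_right)

lemma scaleC_sum_right: "(c::complex) *\<^sub>C (\<Sum>i\<in>A. f i) = (\<Sum>i\<in>A. c *\<^sub>C (f i::'a::complex_inner_space))"
  by (induction A rule: infinite_finite_induct) (auto simp: scaleC_add_right)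

lemma cinner_add_right: "cinner (x::'a::complex_inner_space) (y + z) = cinner x y + cinner x z"
  by (metis cinner_add_left cinner_commute complex_cnj_add)

lemma cinner_scaleC_right: "cinner (x::'a::complex_inner_space) (c *\<^sub>C y) = c * cinner x y"
  by (metis cinner_commute cinner_scaleC_left complex_cnj_cnj complex_cnj_mult)

lemma cinner_zero_left [simp]: "cinner (0::'a::complex_inner_space) y = 0"
  using cinner_add_left[of 0 0 y] by simp

lemma cinner_zero_right [simp]: "cinner (x::'a::complex_inner_space) 0 = 0"
  using cinner_add_right[of x 0 0] by simp

lemma cinner_minus_left: "cinner (- x::'a::complex_inner_space) y = - cinner x y"
  using cinner_add_left[of x "-x" y] by (simp add: eq_neg_iff_add_eq_0 add.commute)

lemma cinner_minus_right: "cinner (x::'a::complex_inner_space) (- y) = - cinner x y"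
  using cinner_add_right[of x y "-y"] by (simp add: eq_neg_iff_add_eq_0 add.commute)

lemma cinner_diff_left: "cinner (x - y::'a::complex_inner_space) z = cinner x z - cinner y z"
  using cinner_add_left[of x "-y" z] by (simp add: cinner_minus_left)

lemma cinner_diff_right: "cinner (x::'a::complex_inner_space) (y - z) = cinner x y - cinner x z"
  using cinner_add_right[of x y "-z"] by (simp add: cinner_minus_right)

lemma cinner_sum_right: "cinner (x::'a::complex_inner_space) (\<Sum>i\<in>A. f i) = (\<Sum>i\<in>A. cinner x (f i))"
  by (induction A rule: infinite_finite_induct) (auto simp: cinner_add_right)

lemma cinner_scaleR_left: "cinner (r *\<^sub>R x::'a::complex_inner_space) y = of_real r * cinner x y"
  by (simp add: scaleR_scaleC cinner_scaleC_left)

lemma cinner_scaleR_right: "cinner (x::'a::complex_inner_space) (r *\<^sub>R y) = of_real r * cinner x y"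
  by (simp add: scaleR_scaleC cinner_scaleC_right)

lemma cinner_self: "cinner (x::'a::complex_inner_space) x = of_real ((norm x)\<^sup>2)"
proof -
  have "Im (cinner x x) = 0" by (metis cinner_commute cnj.simps(2) neg_equal_zero)
  moreover have "Re (cinner x x) = (norm x)\<^sup>2" by (simp add: power2_norm_eq_inner inner_cinner)
  ultimately show ?thesis by (simp add: complex_eq_iff)
qed

lemma norm_eq_1_iff_cinner_self: "norm (x::'a::complex_inner_space) = 1 \<longleftrightarrow> cinner x x = 1"
  unfolding cinner_self of_real_eq_1_iff using power2_eq_iff_nonneg[of "norm x" 1] by simp

lemma norm_eq_if_cinner_eq:
  "cinner (x::'a::complex_inner_space) x = cinner y y \<Longrightarrow> norm x = norm y"
  unfolding cinner_self of_real_eq_iff by (simp add: power2_eq_iff_nonneg)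

lemma norm_scaleC: "norm (c *\<^sub>C (x::'a::complex_inner_space)) = cmod c * norm x"
proof -
  have "cinner (c *\<^sub>C x) (c *\<^sub>C x) = complex_of_real ((cmod c)\<^sup>2) * cinner x x"
    by (simp only: cinner_scaleC_left cinner_scaleC_right complex_norm_square) (simp add: mult_ac)
  also have "\<dots> = cinner (cmod c *\<^sub>R x) (cmod c *\<^sub>R x)"
    by (simp add: cinner_scaleR_left cinner_scaleR_right power2_eq_square)
  finally have "norm (c *\<^sub>C x) = norm (cmod c *\<^sub>R x)" by (rule norm_eq_if_cinner_eq)
  then show ?thesis by simp
qed

lemma cinner_cauchy_schwarz: "cmod (cinner (x::'a::complex_inner_space) y) \<le> norm x * norm y"
proof (cases "cinner x y = 0")
  case False
  define c where "c = cinner x y / complex_of_real (cmod (cinner x y))"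
  have "cnj c * cinner x y = complex_of_real (cmod (cinner x y))"
    using False unfolding c_def by (simp add: complex_norm_square[symmetric] field_simps power2_eq_square)
  then have "cmod (cinner x y) = inner (c *\<^sub>C x) y"
    by (simp add: cinner_scaleC_left inner_cinner)
  also have "\<dots> \<le> norm (c *\<^sub>C x) * norm y" by (rule norm_cauchy_schwarz)
  also have "\<dots> = norm x * norm y" using False by (simp add: norm_scaleC c_def norm_divide)
  finally show ?thesis .
qed simp

lemma bounded_bilinear_cinner: "bounded_bilinear (cinner :: 'a::complex_inner_space \<Rightarrow> 'a \<Rightarrow> complex)"
proof
  show "\<exists>K. \<forall>a b::'a. norm (cinner a b) \<le> norm a * norm b * K"
    by (rule exI[of _ 1]) (simp add: cinner_cauchy_schwarz)
qed (auto simp: cinner_add_left cinner_add_right cinner_scaleR_left cinner_scaleR_right scaleR_conv_of_real)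

lemma bounded_bilinear_scaleC: "bounded_bilinear (scaleC :: complex \<Rightarrow> 'a::complex_inner_space \<Rightarrow> 'a)"
proof
  show "\<exists>K. \<forall>a (b::'a). norm (a *\<^sub>C b) \<le> norm a * norm b * K"
    by (rule exI[of _ 1]) (simp add: norm_scaleC)
qed (auto simp: scaleC_add_left scaleC_add_right scaleR_scaleC scaleC_scaleC scaleR_conv_of_real mult.commute)

lemma clinear_imp_linear: "clinear T \<Longrightarrow> linear T"
  unfolding clinear_def by (intro linearI) (auto simp: scaleR_scaleC)

lemma antilinear_imp_linear: "antilinear T \<Longrightarrow> linear T"
  unfolding antilinear_def by (intro linearI) (auto simp: scaleR_scaleC)

section \<open>Gram--Schmidt orthonormalisation\<close>

function gram_schmidt :: "(nat \<Rightarrow> 'a::complex_inner_space) \<Rightarrow> nat \<Rightarrow> 'a" where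
  "gram_schmidt v b =
     (let u = v b - (\<Sum>a\<in>{1..<b}. cinner (gram_schmidt v a) (v b) *\<^sub>C gram_schmidt v a)
      in (1 / norm u) *\<^sub>R u)"
  by auto
termination by (relation "Wellfounded.measure snd") auto

declare gram_schmidt.simps [simp del]

definition gram_schmidt_residual :: "(nat \<Rightarrow> 'a::complex_inner_space) \<Rightarrow> nat \<Rightarrow> 'a" where
  "gram_schmidt_residual v b = v b - (\<Sum>a\<in>{1..<b}. cinner (gram_schmidt v a) (v b) *\<^sub>C gram_schmidt v a)"

lemma gram_schmidt_eq_residual:
  "gram_schmidt v b = (1 / norm (gram_schmidt_residual v b)) *\<^sub>R gram_schmidt_residual v b"
  by (subst gram_schmidt.simps) (simp add: gram_schmidt_residual_def Let_def)

lemma norm_gram_schmidt: "gram_schmidt_residual v b \<noteq> 0 \<Longrightarrow> norm (gram_schmidt v b) = 1"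
  by (simp add: gram_schmidt_eq_residual)

lemma gram_schmidt_orthonormal:
  assumes "\<forall>b\<in>{1..n}. gram_schmidt_residual v b \<noteq> 0" and "a \<in> {1..n}" and "b \<in> {1..n}"
  shows "cinner (gram_schmidt v a) (gram_schmidt v b) = (if a = b then 1 else 0)"
  using assms
proof (induction n arbitrary: a b)
  case (Suc n)
  have IH: "cinner (gram_schmidt v a) (gram_schmidt v b) = (if a = b then 1 else 0)"
    if "a \<in> {1..n}" "b \<in> {1..n}" for a b
    using Suc that by auto
  have new: "cinner (gram_schmidt v a) (gram_schmidt v (Suc n)) = 0" if a: "a \<in> {1..n}" for a
  proof -
    have "cinner (gram_schmidt v a) (gram_schmidt_residual v (Suc n)) =
        cinner (gram_schmidt v a) (v (Suc n))
        - (\<Sum>c\<in>{1..<Suc n}. cinner (gram_schmidt v c) (v (Suc n)) * cinner (gram_schmidt v a) (gram_schmidt v c))"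
      by (simp only: gram_schmidt_residual_def cinner_diff_right cinner_sum_right cinner_scaleC_right)
    also have "(\<Sum>c\<in>{1..<Suc n}. cinner (gram_schmidt v c) (v (Suc n)) * cinner (gram_schmidt v a) (gram_schmidt v c))
        = (\<Sum>c\<in>{1..<Suc n}. if c = a then cinner (gram_schmidt v a) (v (Suc n)) else 0)"
      by (rule sum.cong) (use a IH in auto)
    finally have "cinner (gram_schmidt v a) (gram_schmidt_residual v (Suc n)) = 0"
      using a by simp
    then show ?thesis by (simp add: gram_schmidt_eq_residual[of v "Suc n"] cinner_scaleR_right)
  qed
  have "norm (gram_schmidt v (Suc n)) = 1"
    using Suc.prems(1) by (intro norm_gram_schmidt) auto
  then have self: "cinner (gram_schmidt v (Suc n)) (gram_schmidt v (Suc n)) = 1"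
    unfolding norm_eq_1_iff_cinner_self .
  have "a \<in> {1..n} \<or> a = Suc n" "b \<in> {1..n} \<or> b = Suc n" using Suc.prems by auto
  then show ?case
  proof (elim disjE)
    assume "a = Suc n" "b \<in> {1..n}"
    then show ?thesis using new[of b] cinner_commute[of "gram_schmidt v a"] by auto
  qed (use IH new self in auto)
qed simp

lemma gram_schmidt_fixpoint:
  assumes T: "clinear T" and fx: "\<And>c. c \<le> b \<Longrightarrow> T (v c) = v c"
  shows "T (gram_schmidt v b) = gram_schmidt v b"
  using fx
proof (induction b rule: less_induct)
  case (less b)
  have lin: "linear T" by (rule clinear_imp_linear[OF T])
  have "T (gram_schmidt_residual v b) = gram_schmidt_residual v b"
    using less T by (simp add: gram_schmidt_residual_def linear_diff[OF lin] linear_sum[OF lin] clinear_def)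
  then show ?case by (simp add: gram_schmidt_eq_residual linear_scale[OF lin])
qed

text \<open>Gram--Schmidt commutes with unitary (\<open>g = id\<close>) and antiunitary (\<open>g = cnj\<close>) maps.\<close>

lemma gram_schmidt_transport:
  assumes add: "\<And>x y. T (x + y) = T x + T y" and sc: "\<And>c x. T (c *\<^sub>C x) = g c *\<^sub>C T x"
    and ci: "\<And>x y. cinner (T x) (T y) = g (cinner x y)"
    and greal: "\<And>r. g (complex_of_real r) = complex_of_real r"
  shows "gram_schmidt (\<lambda>c. T (v c)) b = T (gram_schmidt v b)"
proof (induction b rule: less_induct)
  case (less b)
  have lin: "linear T"
    by (rule linearI) (auto simp: add scaleR_scaleC sc greal)
  have "norm (T x) = norm x" for x
    by (rule norm_eq_if_cinner_eq, subst ci) (simp only: cinner_self greal)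
  moreover have "gram_schmidt_residual (\<lambda>c. T (v c)) b = T (gram_schmidt_residual v b)"
    using less by (simp add: gram_schmidt_residual_def linear_diff[OF lin] linear_sum[OF lin] sc ci)
  ultimately show ?case by (simp add: gram_schmidt_eq_residual linear_scale[OF lin])
qed

lemma gram_schmidt_scaleR:
  assumes "0 < c"
  shows "gram_schmidt (\<lambda>b. c *\<^sub>R v b) b = gram_schmidt v b
         \<and> gram_schmidt_residual (\<lambda>b. c *\<^sub>R v b) b = c *\<^sub>R gram_schmidt_residual v b"
proof (induction b rule: less_induct)
  case (less b)
  then have "gram_schmidt_residual (\<lambda>b. c *\<^sub>R v b) b = c *\<^sub>R gram_schmidt_residual v b"
    by (simp add: gram_schmidt_residual_def cinner_scaleR_right scaleR_diff_right scaleR_sum_right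
        scaleR_scaleC scaleC_scaleC cinner_scaleC_right scaleC_diff_right scaleC_sum_right)
  with assms show ?case by (simp add: gram_schmidt_eq_residual)
qed

lemma norm_normalize_diff_le:
  fixes u e :: "'a::real_normed_vector"
  assumes e: "norm e = 1" and u: "u \<noteq> 0"
  shows "norm ((1 / norm u) *\<^sub>R u - e) \<le> 2 * norm (u - e)"
proof -
  have "norm ((1 / norm u) *\<^sub>R u - u) = \<bar>1 / norm u - 1\<bar> * norm u"
    by (metis norm_scaleR scaleR_diff_left scaleR_one)
  also have "\<dots> = \<bar>norm e - norm u\<bar>" using u e by (simp add: abs_mult_pos[symmetric] field_simps)
  also have "\<dots> \<le> norm (u - e)" by (metis norm_triangle_ineq3 abs_minus_commute)
  finally have "norm ((1 / norm u) *\<^sub>R u - u) \<le> norm (u - e)" .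
  then show ?thesis using norm_triangle_ineq[of "(1 / norm u) *\<^sub>R u - u" "u - e"] by simp
qed

lemma sum_pow8_le: "real b + 2 * (\<Sum>a\<in>{1..<b}. (8::real) ^ a) \<le> 8 ^ b / 2"
proof (induction b)
  case (Suc b)
  have "(1::real) \<le> 8 ^ b" by simp
  moreover have "(\<Sum>a\<in>{1..<Suc b}. (8::real) ^ a) \<le> (\<Sum>a\<in>{1..<b}. 8 ^ a) + 8 ^ b"
    by (cases b) (simp_all add: sum.atLeastLessThan_Suc)
  ultimately have "real (Suc b) + 2 * (\<Sum>a\<in>{1..<Suc b}. (8::real) ^ a) \<le> 8 ^ b / 2 + 1 + 2 * 8 ^ b"
    using Suc.IH by linarith
  also have "\<dots> \<le> 8 ^ Suc b / 2" using \<open>1 \<le> 8 ^ b\<close> by (simp only: power_Suc)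
  finally show ?case .
qed simp

text \<open>If \<open>v\<close> is \<open>\<delta>\<close>-close to an orthonormal family \<open>e\<close> and the first \<open>b - 1\<close> Gram--Schmidt vectors
are within \<open>8\<^sup>a \<delta>\<close> of \<open>e a\<close>, each projection coefficient is at most \<open>2 \<cdot> 8\<^sup>a \<delta> + \<delta>\<close>; the constant 8
absorbs the resulting geometric sum, and normalising at most doubles the error.\<close>

lemma gram_schmidt_residual_close:
  fixes v e :: "nat \<Rightarrow> 'a::complex_inner_space"
  assumes on: "\<forall>a\<in>{1..n}. \<forall>b\<in>{1..n}. cinner (e a) (e b) = (if a = b then 1 else 0)"
    and cl: "\<forall>a\<in>{1..n}. norm (v a - e a) \<le> \<delta>" and d: "0 \<le> \<delta>" "\<delta> \<le> 1" and b: "b \<in> {1..n}"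
    and prev: "\<And>a. a \<in> {1..<b} \<Longrightarrow> norm (gram_schmidt v a) = 1 \<and> norm (gram_schmidt v a - e a) \<le> 8 ^ a * \<delta>"
  shows "norm (gram_schmidt_residual v b - e b) \<le> 8 ^ b * \<delta> / 2"
proof -
  have ne: "norm (e a) = 1" if "a \<in> {1..n}" for a
    using on that by (simp add: norm_eq_1_iff_cinner_self)
  have "norm (v b - e b) \<le> \<delta>" using cl b by blast
  then have nvb: "norm (v b) \<le> 2"
    using norm_triangle_sub[of "v b" "e b"] ne[OF b] d by linarith
  have coef: "cmod (cinner (gram_schmidt v a) (v b)) \<le> 2 * 8 ^ a * \<delta> + \<delta>" if a: "a \<in> {1..<b}" for a
  proof -
    have an: "a \<in> {1..n}" using a b by auto
    have "cinner (gram_schmidt v a) (v b) = cinner (gram_schmidt v a - e a) (v b) + cinner (e a) (v b - e b)"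
      using on an b a by (simp add: cinner_diff_left cinner_diff_right)
    then have "cmod (cinner (gram_schmidt v a) (v b))
        \<le> cmod (cinner (gram_schmidt v a - e a) (v b)) + cmod (cinner (e a) (v b - e b))"
      by (simp add: norm_triangle_ineq)
    also have "\<dots> \<le> norm (gram_schmidt v a - e a) * norm (v b) + norm (e a) * norm (v b - e b)"
      by (intro add_mono cinner_cauchy_schwarz)
    also have "\<dots> \<le> (8 ^ a * \<delta>) * 2 + 1 * \<delta>"
      using prev[OF a] nvb ne[OF an] cl b d by (intro add_mono mult_mono) auto
    finally show ?thesis by simp
  qed
  have "norm (gram_schmidt_residual v b - e b)
      \<le> norm (v b - e b) + norm (\<Sum>a\<in>{1..<b}. cinner (gram_schmidt v a) (v b) *\<^sub>C gram_schmidt v a)"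
    unfolding gram_schmidt_residual_def
    using norm_triangle_ineq4[of "v b - e b" "\<Sum>a\<in>{1..<b}. cinner (gram_schmidt v a) (v b) *\<^sub>C gram_schmidt v a"]
    by (simp add: algebra_simps)
  also have "\<dots> \<le> \<delta> + (\<Sum>a\<in>{1..<b}. 2 * 8 ^ a * \<delta> + \<delta>)"
    using cl b prev coef
    by (intro add_mono order_trans[OF norm_sum sum_mono]) (auto simp: norm_scaleC)
  also have "\<dots> = \<delta> * (real b + 2 * (\<Sum>a\<in>{1..<b}. 8 ^ a))"
    using b by (simp add: sum.distrib sum_distrib_left algebra_simps of_nat_diff)
  also have "\<dots> \<le> \<delta> * (8 ^ b / 2)"
    using sum_pow8_le d(1) by (rule mult_left_mono)
  finally show ?thesis by (simp add: mult.commute)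
qed

lemma gram_schmidt_perturbation:
  fixes v e :: "nat \<Rightarrow> 'a::complex_inner_space"
  assumes on: "\<forall>a\<in>{1..n}. \<forall>b\<in>{1..n}. cinner (e a) (e b) = (if a = b then 1 else 0)"
    and cl: "\<forall>a\<in>{1..n}. norm (v a - e a) \<le> \<delta>" and d0: "0 \<le> \<delta>" and small: "8 ^ n * \<delta> \<le> 1"
  shows "b \<in> {1..n} \<Longrightarrow>
           gram_schmidt_residual v b \<noteq> 0 \<and> norm (gram_schmidt v b - e b) \<le> 8 ^ b * \<delta>"
proof (induction b rule: less_induct)
  case (less b)
  have eb: "norm (e b) = 1" using on less.prems by (simp add: norm_eq_1_iff_cinner_self)
  have "8 ^ b * \<delta> \<le> 8 ^ n * \<delta>" using less.prems d0 by (intro mult_right_mono power_increasing) auto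
  with small have b1: "8 ^ b * \<delta> \<le> 1" by linarith
  then have "\<delta> \<le> 1" using d0 by (smt (verit) one_le_numeral one_le_power mult_le_cancel_right1)
  then have close: "norm (gram_schmidt_residual v b - e b) \<le> 8 ^ b * \<delta> / 2"
    using less on cl d0 by (intro gram_schmidt_residual_close[where n=n]) (auto intro: norm_gram_schmidt)
  then have nz: "gram_schmidt_residual v b \<noteq> 0" using eb b1 by auto
  have "norm (gram_schmidt v b - e b) \<le> 2 * norm (gram_schmidt_residual v b - e b)"
    unfolding gram_schmidt_eq_residual by (rule norm_normalize_diff_le[OF eb nz])
  with close nz show ?case by simp
qed

lemma orthonormal_family_cspan_eq:
  fixes w :: "nat \<Rightarrow> 'a::complex_inner_space"
  assumes dim: "has_cdim S m"
    and inS: "\<forall>a\<in>{1..m}. w a \<in> S"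
    and on: "\<forall>a\<in>{1..m}. \<forall>b\<in>{1..m}. cinner (w a) (w b) = (if a = b then 1 else 0)"
  shows "cspan (w ` {1..m}) = S"
proof -
  interpret cv: vector_space "scaleC :: complex \<Rightarrow> 'a \<Rightarrow> 'a"
    by unfold_locales (auto simp: scaleC_add_right scaleC_add_left scaleC_scaleC scaleC_one)
  have span_eq: "cspan X = cv.span X" for X
    unfolding cspan_def cv.span_explicit by auto
  have dep_eq: "cdependent X = cv.dependent X" for X
    unfolding cdependent_def cv.dependent_explicit by blast
  obtain B where B: "finite B" "card B = m" "\<not> cv.dependent B" "cv.span B = S"
    using dim unfolding has_cdim_def span_eq dep_eq by blast
  define W where "W = w ` {1..m}"
  have inj: "inj_on w {1..m}"
    by (rule inj_onI) (metis on zero_neq_one)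
  then have cardW: "card W = m" unfolding W_def by (simp add: card_image)
  have indep: "\<not> cv.dependent W"
  proof
    assume "cv.dependent W"
    then obtain t u x where t: "finite t" "t \<subseteq> W" "(\<Sum>y\<in>t. u y *\<^sub>C y) = 0" "x \<in> t" "u x \<noteq> 0"
      unfolding cv.dependent_explicit by blast
    have "cinner x y = (if x = y then 1 else 0)" if y: "y \<in> t" for y
    proof -
      obtain a b where "a \<in> {1..m}" "b \<in> {1..m}" "x = w a" "y = w b"
        using y t unfolding W_def by blast
      then show ?thesis using on inj by (auto dest: inj_onD)
    qed
    then have "(\<Sum>y\<in>t. u y * cinner x y) = (\<Sum>y\<in>t. if y = x then u x else 0)"
      by (intro sum.cong) auto
    also have "\<dots> = u x" using t(1,4) by simp
    finally have "cinner x (\<Sum>y\<in>t. u y *\<^sub>C y) = u x"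
      by (simp add: cinner_sum_right cinner_scaleC_right)
    then show False using t(3,5) by simp
  qed
  have WS: "W \<subseteq> S" using inS unfolding W_def by auto
  have "S \<subseteq> cv.span W"
  proof
    fix x assume xS: "x \<in> S"
    show "x \<in> cv.span W"
    proof (rule ccontr)
      assume nx: "x \<notin> cv.span W"
      have "\<not> cv.dependent (insert x W)" by (rule cv.independent_insertI[OF nx indep])
      moreover have "insert x W \<subseteq> cv.span B" using xS WS B(4) by auto
      ultimately have "card (insert x W) \<le> m" using cv.independent_span_bound[OF B(1)] B(2) by simp
      moreover have "x \<notin> W" using nx cv.span_superset by blast
      ultimately show False using cardW W_def by simp
    qed
  qed
  moreover have "cv.span W \<subseteq> S" using WS B(4) by (metis cv.span_minimal cv.subspace_span)
  ultimately show ?thesis unfolding span_eq W_def by auto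
qed


section \<open>Lattice grids and uniform continuity\<close>

lemma finite_common_radius:
  assumes "finite A" and "\<forall>a\<in>A. \<exists>r>0. Q a r"
    and mono: "\<And>a r r'. Q a r \<Longrightarrow> 0 < r' \<Longrightarrow> r' \<le> r \<Longrightarrow> Q a r'"
  shows "\<exists>r>0. \<forall>a\<in>A. Q a (r::real)"
  using assms(1,2)
proof (induction A rule: finite_induct)
  case empty then show ?case by (auto intro: exI[of _ 1])
next
  case (insert a A)
  then obtain r1 where r1: "r1 > 0" "\<forall>b\<in>A. Q b r1" by auto
  obtain r2 where r2: "r2 > 0" "Q a r2" using insert by auto
  show ?case
    by (rule exI[of _ "min r1 r2"]) (use r1 r2 mono in auto)
qed

text \<open>A continuous function whose differences are invariant under lattice translations is
uniformly continuous: reduce to the compact neighbourhood of a fundamental cell.\<close>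

lemma lattice_invariant_uniform_modulus:
  fixes f :: "real^'d \<Rightarrow> 'h::real_normed_vector" and B Ai :: "real^'d^'d"
  assumes cont: "continuous_on UNIV f"
    and BAi: "B ** Ai = mat 1"
    and inv: "\<And>k q n. norm (f (k + B *v (\<chi> i. real_of_int (n i))) - f (q + B *v (\<chi> i. real_of_int (n i))))
                       = norm (f k - f q)"
    and d: "0 < \<delta>"
  shows "\<exists>r>0. \<forall>k q. dist k q < r \<longrightarrow> norm (f k - f q) \<le> \<delta>"
proof -
  define F where "F = (\<lambda>x. B *v x) ` cbox (vec 0) (vec 1)"
  have cF: "compact F" unfolding F_def
    by (intro compact_continuous_image linear_continuous_on) (auto simp: matrix_vector_mul_bounded_linear)
  define F1 where "F1 = {x + y |x y. x \<in> F \<and> y \<in> cball 0 1}"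
  have cF1: "compact F1" unfolding F1_def by (intro compact_sums cF compact_cball)
  have "uniformly_continuous_on F1 f"
    by (rule compact_uniformly_continuous[OF continuous_on_subset[OF cont] cF1]) auto
  then obtain e where e: "e > 0" "\<And>x x'. x \<in> F1 \<Longrightarrow> x' \<in> F1 \<Longrightarrow> dist x' x < e \<Longrightarrow> dist (f x') (f x) < \<delta>"
    unfolding uniformly_continuous_on_def using d by metis
  show ?thesis
  proof (intro exI[of _ "min e 1"] conjI allI impI)
    show "0 < min e 1" using e by simp
    fix k q :: "real^'d" assume kq: "dist k q < min e 1"
    define l where "l = B *v (\<chi> i. real_of_int \<lfloor>(Ai *v k) $ i\<rfloor>)"
    have "k - l = B *v (Ai *v k - (\<chi> i. real_of_int \<lfloor>(Ai *v k) $ i\<rfloor>))"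
      unfolding l_def by (simp add: matrix_vector_mult_diff_distrib matrix_vector_mul_assoc BAi)
    moreover have "Ai *v k - (\<chi> i. real_of_int \<lfloor>(Ai *v k) $ i\<rfloor>) \<in> cbox (vec 0) (vec 1)"
      unfolding mem_box_cart by (auto simp: floor_le_iff) linarith+
    ultimately have kF: "k - l \<in> F" unfolding F_def by blast
    have kF1: "k - l \<in> F1" unfolding F1_def using kF by (intro CollectI exI[of _ "k - l"] exI[of _ 0]) auto
    have dq: "dist (k - l) (q - l) = dist k q" by (simp add: dist_norm)
    have qF1: "q - l \<in> F1" unfolding F1_def using kF kq dq
      by (intro CollectI exI[of _ "k - l"] exI[of _ "q - k"]) (auto simp: dist_norm norm_minus_commute)
    have "norm (f k - f q) = norm (f (k - l + l) - f (q - l + l))" by simp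
    also have "\<dots> = norm (f (k - l) - f (q - l))" unfolding l_def by (rule inv)
    also have "\<dots> < \<delta>" using e(2)[OF qF1 kF1] kq dq by (simp add: dist_commute dist_norm)
    finally show "norm (f k - f q) \<le> \<delta>" by simp
  qed
qed

lemma fine_grid_exists:
  fixes B :: "real^'d^'d"
  assumes r: "0 < r"
  shows "\<exists>N::nat. 1 \<le> N \<and> (\<forall>v. (\<forall>i. \<bar>v $ i\<bar> < 1 / real N) \<longrightarrow> norm (B *v v) < r)"
proof -
  obtain K where K: "K > 0" "\<And>v. norm (B *v v) \<le> norm v * K"
    using bounded_linear.pos_bounded[OF matrix_vector_mul_bounded_linear[of B]] by blast
  define N :: nat where "N = nat \<lceil>real CARD('d) * K / r\<rceil> + 1"
  have "real CARD('d) * K / r < real N" unfolding N_def by linarith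
  then have N: "real CARD('d) * K < r * real N" using r by (simp add: field_simps)
  have "norm (B *v v) < r" if v: "\<forall>i. \<bar>v $ i\<bar> < 1 / real N" for v
  proof -
    have "norm v \<le> (\<Sum>i\<in>UNIV. \<bar>v $ i\<bar>)" by (rule norm_le_l1_cart)
    also have "\<dots> \<le> (\<Sum>i\<in>(UNIV::'d set). 1 / real N)" by (rule sum_mono) (use v in \<open>auto intro: less_imp_le\<close>)
    also have "\<dots> = real CARD('d) / real N" by simp
    finally have "norm (B *v v) \<le> real CARD('d) / real N * K"
      using K by (meson mult_right_mono order_trans less_imp_le)
    also have "\<dots> < r" using N K by (simp add: field_simps N_def)
    finally show ?thesis .
  qed
  then show ?thesis by (intro exI[of _ N]) (simp add: N_def)
qed

lemma finite_int_box: "finite {n :: 'd::finite \<Rightarrow> int. \<forall>i. n i \<in> {a i..b i}}"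
proof -
  have "{n :: 'd \<Rightarrow> int. \<forall>i. n i \<in> {a i..b i}} = Pi\<^sub>E UNIV (\<lambda>i. {a i..b i})"
    by (auto simp: PiE_UNIV_domain)
  then show ?thesis by (simp add: finite_PiE)
qed

lemma abs_diff_of_int_less_imp_floor_box:
  "\<bar>t - real_of_int z\<bar> < real_of_int j \<Longrightarrow> z \<in> {\<lfloor>t\<rfloor> - j .. \<lfloor>t\<rfloor> + j}"
  by (simp add: abs_less_iff) linarith


section \<open>Symmetric Bloch frames\<close>

locale bloch_frame =
  fixes P :: "real^'d \<Rightarrow> ('h::complex_inner_space \<Rightarrow>\<^sub>L 'h)"
    and L :: "(real^'d) set"
    and tau :: "real^'d \<Rightarrow> 'h \<Rightarrow> 'h"
    and Theta :: "'h \<Rightarrow> 'h"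
    and m :: nat
    and Phi :: "nat \<Rightarrow> real^'d \<Rightarrow> 'h"
  assumes proj: "\<forall>k. orth_projector (P k) \<and> has_cdim (range (blinfun_apply (P k))) m"
    and smooth_P: "smooth_fun P"
    and rep: "unitary_rep L tau"
    and P_shift_conj: "\<forall>k. \<forall>l\<in>L. \<forall>x. P (k + l) x = tau l (P k (inv (tau l) x))"
    and antiunitary: "antiunitary_op Theta"
    and P_minus_conj: "\<forall>k x. P (- k) x = Theta (P k (inv Theta x))"
    and onb: "\<forall>k. is_onb_frame P m Phi k"
    and Phi_shift: "\<forall>a\<in>{1..m}. \<forall>k. \<forall>l\<in>L. Phi a (k + l) = tau l (Phi a k)"
    and Phi_minus: "\<forall>a\<in>{1..m}. \<forall>k. Phi a (- k) = Theta (Phi a k)"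
begin

lemma clinear_P: "clinear (blinfun_apply (P k))"
  using proj unfolding orth_projector_def by blast

lemma P_idem: "P k (P k x) = P k x"
  using proj unfolding orth_projector_def by blast

lemma P_self_adjoint: "cinner (P k x) y = cinner x (P k y)"
  using proj unfolding orth_projector_def by blast

lemma norm_P_le: "norm (P k x) \<le> norm x"
proof -
  have "cinner x (P k x) = cinner (P k x) (P k x)" by (simp add: P_self_adjoint P_idem)
  then have "(norm (P k x))\<^sup>2 = cmod (cinner x (P k x))" by (simp only: cinner_self norm_of_real) simp
  also have "\<dots> \<le> norm x * norm (P k x)" by (rule cinner_cauchy_schwarz)
  finally have "norm (P k x) * norm (P k x) \<le> norm x * norm (P k x)" by (simp add: power2_eq_square)
  then show ?thesis by (cases "norm (P k x) = 0") auto
qed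

lemma P_Phi: "a \<in> {1..m} \<Longrightarrow> P k (Phi a k) = Phi a k"
proof -
  assume a: "a \<in> {1..m}"
  have "Phi a k \<in> cspan ((\<lambda>a. Phi a k) ` {1..m})"
    unfolding cspan_def using a
    by (intro CollectI exI[of _ "{Phi a k}"] exI[of _ "\<lambda>_. 1"]) (auto simp: scaleC_one)
  then show ?thesis using onb P_idem unfolding is_onb_frame_def by auto
qed

lemma clinear_tau: "l \<in> L \<Longrightarrow> clinear (tau l)"
  using rep unfolding unitary_rep_def unitary_op_def by blast

lemma cinner_tau: "l \<in> L \<Longrightarrow> cinner (tau l x) (tau l y) = cinner x y"
  using rep unfolding unitary_rep_def unitary_op_def by blast

lemma linear_tau: "l \<in> L \<Longrightarrow> linear (tau l)"
  using clinear_tau by (rule clinear_imp_linear)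

lemma norm_tau: "l \<in> L \<Longrightarrow> norm (tau l x) = norm x"
  by (intro norm_eq_if_cinner_eq cinner_tau)

lemma P_shift: "l \<in> L \<Longrightarrow> P (k + l) (tau l x) = tau l (P k x)"
proof -
  assume l: "l \<in> L"
  have "inj (tau l)"
  proof (rule injI)
    fix x y assume "tau l x = tau l y"
    then have "norm (x - y) = 0" using linear_diff[OF linear_tau[OF l]] norm_tau[OF l] by (metis norm_zero right_minus_eq)
    then show "x = y" by simp
  qed
  then show ?thesis using P_shift_conj l by (simp add: inv_f_f)
qed

lemma antilinear_Theta: "antilinear Theta"
  using antiunitary unfolding antiunitary_op_def by blast

lemma cinner_Theta: "cinner (Theta x) (Theta y) = cnj (cinner x y)"
  using antiunitary cinner_commute unfolding antiunitary_op_def by metis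

lemma linear_Theta: "linear Theta"
  using antilinear_Theta by (rule antilinear_imp_linear)

lemma norm_Theta: "norm (Theta x) = norm x"
  by (rule norm_eq_if_cinner_eq, subst cinner_Theta) (simp only: cinner_self complex_cnj_complex_of_real)

lemma P_minus: "P (- k) (Theta x) = Theta (P k x)"
proof -
  have "inj Theta"
  proof (rule injI)
    fix x y assume "Theta x = Theta y"
    then have "norm (x - y) = 0" using linear_diff[OF linear_Theta] norm_Theta by (metis norm_zero right_minus_eq)
    then show "x = y" by simp
  qed
  then show ?thesis using P_minus_conj by (simp add: inv_f_f)
qed

lemma Phi_uniform_modulus:
  assumes lat: "L = range (\<lambda>n::'d \<Rightarrow> int. B *v (\<chi> i. real_of_int (n i)))" and BAi: "B ** Ai = mat 1"
    and cont: "\<forall>a\<in>{1..m}. continuous_on UNIV (Phi a)" and d: "0 < \<delta>"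
  shows "\<exists>r>0. \<forall>a\<in>{1..m}. \<forall>k q. dist k q < r \<longrightarrow> norm (Phi a k - Phi a q) \<le> \<delta>"
proof (rule finite_common_radius)
  show "\<forall>a\<in>{1..m}. \<exists>r>0. \<forall>k q. dist k q < r \<longrightarrow> norm (Phi a k - Phi a q) \<le> \<delta>"
  proof
    fix a assume a: "a \<in> {1..m}"
    show "\<exists>r>0. \<forall>k q. dist k q < r \<longrightarrow> norm (Phi a k - Phi a q) \<le> \<delta>"
    proof (rule lattice_invariant_uniform_modulus[OF _ BAi _ d])
      show "continuous_on UNIV (Phi a)" using cont a by blast
      fix k q :: "real^'d" and n :: "'d \<Rightarrow> int"
      have l: "B *v (\<chi> i. real_of_int (n i)) \<in> L" unfolding lat by blast
      then show "norm (Phi a (k + B *v (\<chi> i. real_of_int (n i))) - Phi a (q + B *v (\<chi> i. real_of_int (n i))))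
                 = norm (Phi a k - Phi a q)"
        using Phi_shift a by (simp add: linear_diff[OF linear_tau[OF l], symmetric] norm_tau)
    qed
  qed
qed auto

end

section \<open>Smoothing by averaging over a refined lattice\<close>

text \<open>\<open>B\<close> is a basis matrix of the lattice with inverse \<open>Ai\<close>, \<open>1/N\<close> the mesh of the refined grid
\<open>{B n / N}\<close>, \<open>r\<close> a modulus of uniform continuity of the frame for the error \<open>\<delta>\<close>, chosen so that
all grid points near \<open>k\<close> lie within distance \<open>r\<close> of \<open>k\<close>.\<close>

locale grid_smoothing = bloch_frame P L tau Theta m Phi
  for P :: "real^'d \<Rightarrow> ('h::complex_inner_space \<Rightarrow>\<^sub>L 'h)" and L tau Theta m Phi +
  fixes B Ai :: "real^'d^'d" and N :: nat and \<delta> r :: real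
  assumes BAi: "B ** Ai = mat 1" "Ai ** B = mat 1"
    and lattice: "L = range (\<lambda>n::'d\<Rightarrow>int. B *v (\<chi> i. real_of_int (n i)))"
    and N_pos: "1 \<le> N" and \<delta>_pos: "0 < \<delta>" and \<delta>_small: "8 ^ m * \<delta> \<le> 1"
    and modulus: "\<forall>a\<in>{1..m}. \<forall>k q. dist k q < r \<longrightarrow> norm (Phi a k - Phi a q) \<le> \<delta>"
    and mesh: "\<forall>v. (\<forall>i. \<bar>v $ i\<bar> < 1 / real N) \<longrightarrow> norm (B *v v) < r"
begin

definition lattice_coords :: "real^'d \<Rightarrow> real^'d" where
  "lattice_coords k = Ai *v k"

definition int_vec :: "('d \<Rightarrow> int) \<Rightarrow> real^'d" where
  "int_vec n = (\<chi> i. real_of_int (n i))"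

definition grid_point :: "('d \<Rightarrow> int) \<Rightarrow> real^'d" where
  "grid_point n = (1 / real N) *\<^sub>R (B *v int_vec n)"

definition grid_weight :: "real^'d \<Rightarrow> ('d \<Rightarrow> int) \<Rightarrow> real" where
  "grid_weight k n = (\<Prod>i\<in>UNIV. bump (real N * lattice_coords k $ i - real_of_int (n i)))"

definition grid_support :: "real^'d \<Rightarrow> ('d \<Rightarrow> int) set" where
  "grid_support k = {n. grid_weight k n \<noteq> 0}"

definition Phi_avg :: "nat \<Rightarrow> real^'d \<Rightarrow> 'h" where
  "Phi_avg b k = (\<Sum>n\<in>grid_support k. grid_weight k n *\<^sub>R Phi b (grid_point n))"

definition total_weight :: "real^'d \<Rightarrow> real" where
  "total_weight k = (\<Sum>n\<in>grid_support k. grid_weight k n)"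

definition Phi_proj :: "real^'d \<Rightarrow> nat \<Rightarrow> 'h" where
  "Phi_proj k b = (if b \<in> {1..m} then P k (Phi_avg b k) else 0)"

definition Psi :: "nat \<Rightarrow> real^'d \<Rightarrow> 'h" where
  "Psi a k = gram_schmidt (Phi_proj k) a"

lemma lattice_coords_matrix: "lattice_coords (B *v v) = v"
  unfolding lattice_coords_def by (simp add: matrix_vector_mul_assoc BAi)

lemma matrix_lattice_coords: "B *v lattice_coords k = k"
  unfolding lattice_coords_def by (simp add: matrix_vector_mul_assoc BAi)

lemma lattice_coords_add: "lattice_coords (k + l) = lattice_coords k + lattice_coords l"
  unfolding lattice_coords_def by (simp add: matrix_vector_right_distrib)

lemma lattice_coords_minus: "lattice_coords (- k) = - lattice_coords k"
  unfolding lattice_coords_def by (simp add: linear_neg[OF matrix_vector_mul_linear])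

lemma grid_weight_nonneg: "0 \<le> grid_weight k n"
  unfolding grid_weight_def by (intro prod_nonneg) (simp add: bump_nonneg)

lemma grid_support_iff:
  "n \<in> grid_support k \<longleftrightarrow> (\<forall>i. \<bar>real N * lattice_coords k $ i - real_of_int (n i)\<bar> < 1)"
  unfolding grid_support_def grid_weight_def by (simp add: bump_neq_0_iff)

lemma finite_grid_support: "finite (grid_support k)"
proof (rule finite_subset[OF _ finite_int_box])
  show "grid_support k \<subseteq> {n. \<forall>i. n i \<in> {\<lfloor>real N * lattice_coords k $ i\<rfloor> - 1 .. \<lfloor>real N * lattice_coords k $ i\<rfloor> + 1}}"
  proof (intro subsetI CollectI allI)
    fix n i assume "n \<in> grid_support k"
    then have "\<bar>real N * lattice_coords k $ i - real_of_int (n i)\<bar> < real_of_int 1"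
      unfolding grid_support_iff by simp
    then show "n i \<in> {\<lfloor>real N * lattice_coords k $ i\<rfloor> - 1 .. \<lfloor>real N * lattice_coords k $ i\<rfloor> + 1}"
      by (rule abs_diff_of_int_less_imp_floor_box)
  qed
qed

lemma total_weight_pos: "0 < total_weight k"
proof -
  define n where "n = (\<lambda>i. round (real N * lattice_coords k $ i))"
  have "\<bar>real N * lattice_coords k $ i - real_of_int (n i)\<bar> < 1" for i
    using of_int_round_abs_le[of "real N * lattice_coords k $ i"] by (simp add: n_def abs_minus_commute)
  then have n: "n \<in> grid_support k" unfolding grid_support_iff by blast
  then have "0 < grid_weight k n"
    using grid_weight_nonneg unfolding grid_support_def by (simp add: order_le_neq_trans)
  also have "\<dots> \<le> total_weight k" unfolding total_weight_def
    by (rule member_le_sum) (use n finite_grid_support grid_weight_nonneg in auto)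
  finally show ?thesis .
qed

lemma norm_diff_grid_point: "n \<in> grid_support k \<Longrightarrow> norm (k - grid_point n) < r"
proof -
  assume n: "n \<in> grid_support k"
  have Np: "0 < real N" using N_pos by simp
  define v where "v = lattice_coords k - (1 / real N) *\<^sub>R int_vec n"
  have "k - grid_point n = B *v v"
    unfolding v_def grid_point_def
    by (simp add: linear_diff[OF matrix_vector_mul_linear] linear_scale[OF matrix_vector_mul_linear] matrix_lattice_coords)
  moreover have "\<bar>v $ i\<bar> < 1 / real N" for i
  proof -
    have "v $ i = (real N * lattice_coords k $ i - real_of_int (n i)) / real N"
      using Np by (simp add: v_def int_vec_def diff_divide_distrib)
    then have "\<bar>v $ i\<bar> = \<bar>real N * lattice_coords k $ i - real_of_int (n i)\<bar> / real N"
      using Np by (simp add: abs_divide)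
    also have "\<dots> < 1 / real N"
      using n Np unfolding grid_support_iff by (simp add: divide_strict_right_mono)
    finally show ?thesis .
  qed
  ultimately show ?thesis using mesh by auto
qed

text \<open>Translating \<open>k\<close> by the lattice vector \<open>B m\<^sub>0\<close> translates the grid index by \<open>N m\<^sub>0\<close>; this
is why the refinement factor \<open>N\<close> has to be an integer.\<close>

lemma grid_weight_shift: "grid_weight (k + B *v int_vec m\<^sub>0) n = grid_weight k (\<lambda>i. n i - int N * m\<^sub>0 i)"
  unfolding grid_weight_def by (simp add: lattice_coords_add lattice_coords_matrix int_vec_def algebra_simps)

lemma grid_point_shift: "grid_point (\<lambda>i. n i + int N * m\<^sub>0 i) = grid_point n + B *v int_vec m\<^sub>0"
proof -
  have "int_vec (\<lambda>i. n i + int N * m\<^sub>0 i) = int_vec n + real N *\<^sub>R int_vec m\<^sub>0"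
    by (simp add: int_vec_def vec_eq_iff)
  then show ?thesis
    using N_pos by (simp add: grid_point_def linear_add[OF matrix_vector_mul_linear]
        linear_scale[OF matrix_vector_mul_linear] scaleR_add_right)
qed

lemma grid_weight_minus: "grid_weight (- k) n = grid_weight k (\<lambda>i. - n i)"
proof -
  have "real N * lattice_coords (- k) $ i - real_of_int (n i) = - (real N * lattice_coords k $ i - real_of_int (- n i))" for i
    by (simp add: lattice_coords_minus)
  then show ?thesis unfolding grid_weight_def by (simp only: bump_minus)
qed

lemma grid_point_minus: "grid_point (\<lambda>i. - n i) = - grid_point n"
proof -
  have "int_vec (\<lambda>i. - n i) = - int_vec n" by (simp add: int_vec_def vec_eq_iff)
  then show ?thesis by (simp add: grid_point_def linear_neg[OF matrix_vector_mul_linear])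
qed

lemma Phi_avg_shift:
  assumes b: "b \<in> {1..m}" and l: "l \<in> L"
  shows "Phi_avg b (k + l) = tau l (Phi_avg b k)"
proof -
  obtain m\<^sub>0 where m\<^sub>0: "l = B *v int_vec m\<^sub>0" using l unfolding lattice int_vec_def by auto
  define sh where "sh = (\<lambda>n::'d \<Rightarrow> int. (\<lambda>i. n i + int N * m\<^sub>0 i))"
  have wsh: "grid_weight (k + l) (sh n) = grid_weight k n" for n
    unfolding m\<^sub>0 grid_weight_shift sh_def by simp
  have "Phi_avg b (k + l) = (\<Sum>n\<in>grid_support k. grid_weight (k + l) (sh n) *\<^sub>R Phi b (grid_point (sh n)))"
    unfolding Phi_avg_def
    by (rule sum.reindex_bij_witness[of _ sh "\<lambda>n i. n i - int N * m\<^sub>0 i"])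
      (auto simp: sh_def grid_support_def wsh m\<^sub>0 grid_weight_shift)
  also have "\<dots> = (\<Sum>n\<in>grid_support k. grid_weight k n *\<^sub>R tau l (Phi b (grid_point n)))"
  proof -
    have "grid_point (sh n) = grid_point n + l" for n
      unfolding sh_def grid_point_shift m\<^sub>0 ..
    then show ?thesis using Phi_shift b l by (simp add: wsh)
  qed
  also have "\<dots> = tau l (Phi_avg b k)"
    unfolding Phi_avg_def by (simp add: linear_sum[OF linear_tau[OF l]] linear_scale[OF linear_tau[OF l]])
  finally show ?thesis .
qed

lemma Phi_avg_minus:
  assumes b: "b \<in> {1..m}"
  shows "Phi_avg b (- k) = Theta (Phi_avg b k)"
proof -
  define ng where "ng = (\<lambda>n::'d \<Rightarrow> int. (\<lambda>i. - n i))"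
  have wng: "grid_weight (- k) (ng n) = grid_weight k n" for n
    unfolding grid_weight_minus ng_def by simp
  have "Phi_avg b (- k) = (\<Sum>n\<in>grid_support k. grid_weight (- k) (ng n) *\<^sub>R Phi b (grid_point (ng n)))"
    unfolding Phi_avg_def
    by (rule sum.reindex_bij_witness[of _ ng ng]) (auto simp: ng_def grid_support_def wng grid_weight_minus)
  also have "\<dots> = (\<Sum>n\<in>grid_support k. grid_weight k n *\<^sub>R Theta (Phi b (grid_point n)))"
  proof -
    have "grid_point (ng n) = - grid_point n" for n
      unfolding ng_def grid_point_minus ..
    then show ?thesis using Phi_minus b by (simp add: wng)
  qed
  also have "\<dots> = Theta (Phi_avg b k)"
    unfolding Phi_avg_def by (simp add: linear_sum[OF linear_Theta] linear_scale[OF linear_Theta])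
  finally show ?thesis .
qed

lemma Phi_proj_shift: "l \<in> L \<Longrightarrow> Phi_proj (k + l) b = tau l (Phi_proj k b)"
  by (simp add: Phi_proj_def Phi_avg_shift P_shift linear_0[OF linear_tau])

lemma Phi_proj_minus: "Phi_proj (- k) b = Theta (Phi_proj k b)"
  by (simp add: Phi_proj_def Phi_avg_minus P_minus linear_0[OF linear_Theta])

lemma Psi_shift:
  assumes l: "l \<in> L"
  shows "Psi a (k + l) = tau l (Psi a k)"
proof -
  have "Phi_proj (k + l) = (\<lambda>c. tau l (Phi_proj k c))" using Phi_proj_shift[OF l] by blast
  then show ?thesis unfolding Psi_def
    using clinear_tau[OF l] cinner_tau[OF l] by (simp add: clinear_def gram_schmidt_transport[where g=id])
qed

lemma Psi_minus: "Psi a (- k) = Theta (Psi a k)"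
proof -
  have "Phi_proj (- k) = (\<lambda>c. Theta (Phi_proj k c))" using Phi_proj_minus by blast
  then show ?thesis unfolding Psi_def
    using antilinear_Theta cinner_Theta by (simp add: antilinear_def gram_schmidt_transport[where g=cnj])
qed

lemma Phi_avg_close:
  assumes a: "a \<in> {1..m}"
  shows "norm (Phi_avg a k - total_weight k *\<^sub>R Phi a k) \<le> total_weight k * \<delta>"
proof -
  have "Phi_avg a k - total_weight k *\<^sub>R Phi a k
      = (\<Sum>n\<in>grid_support k. grid_weight k n *\<^sub>R (Phi a (grid_point n) - Phi a k))"
    by (simp add: Phi_avg_def total_weight_def scaleR_sum_left scaleR_diff_right sum_subtractf)
  also have "norm \<dots> \<le> (\<Sum>n\<in>grid_support k. norm (grid_weight k n *\<^sub>R (Phi a (grid_point n) - Phi a k)))"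
    by (rule norm_sum)
  also have "\<dots> \<le> (\<Sum>n\<in>grid_support k. grid_weight k n * \<delta>)"
  proof (rule sum_mono)
    fix n assume "n \<in> grid_support k"
    then have "dist (grid_point n) k < r" using norm_diff_grid_point by (simp add: dist_norm norm_minus_commute)
    then have "norm (Phi a (grid_point n) - Phi a k) \<le> \<delta>" using modulus a by blast
    then show "norm (grid_weight k n *\<^sub>R (Phi a (grid_point n) - Phi a k)) \<le> grid_weight k n * \<delta>"
      using grid_weight_nonneg[of k n] by (simp add: mult_left_mono)
  qed
  also have "\<dots> = total_weight k * \<delta>" by (simp add: total_weight_def sum_distrib_right)
  finally show ?thesis .
qed

lemma Phi_proj_close:
  assumes a: "a \<in> {1..m}"
  shows "norm ((1 / total_weight k) *\<^sub>R Phi_proj k a - Phi a k) \<le> \<delta>"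
proof -
  have W: "0 < total_weight k" by (rule total_weight_pos)
  have eq: "(1 / total_weight k) *\<^sub>R Phi_proj k a - Phi a k
      = P k ((1 / total_weight k) *\<^sub>R (Phi_avg a k - total_weight k *\<^sub>R Phi a k))"
    using a W by (simp add: Phi_proj_def blinfun.scaleR_right blinfun.diff_right P_Phi scaleR_diff_right)
  have "norm ((1 / total_weight k) *\<^sub>R Phi_proj k a - Phi a k)
      \<le> norm ((1 / total_weight k) *\<^sub>R (Phi_avg a k - total_weight k *\<^sub>R Phi a k))"
    unfolding eq by (rule norm_P_le)
  also have "\<dots> = (1 / total_weight k) * norm (Phi_avg a k - total_weight k *\<^sub>R Phi a k)"
    using W by simp
  also have "\<dots> \<le> (1 / total_weight k) * (total_weight k * \<delta>)"
    using Phi_avg_close[OF a] W by (intro mult_left_mono) auto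
  also have "\<dots> = \<delta>" using W by simp
  finally show ?thesis .
qed

lemma Psi_close:
  assumes b: "b \<in> {1..m}"
  shows "gram_schmidt_residual (Phi_proj k) b \<noteq> 0 \<and> norm (Psi b k - Phi b k) \<le> 8 ^ b * \<delta>"
proof -
  define c where "c = 1 / total_weight k"
  have c: "0 < c" using total_weight_pos by (simp add: c_def)
  have "\<forall>a\<in>{1..m}. \<forall>b\<in>{1..m}. cinner (Phi a k) (Phi b k) = (if a = b then 1 else 0)"
    using onb unfolding is_onb_frame_def by blast
  moreover have "\<forall>a\<in>{1..m}. norm (c *\<^sub>R Phi_proj k a - Phi a k) \<le> \<delta>"
    using Phi_proj_close by (simp add: c_def)
  ultimately have "gram_schmidt_residual (\<lambda>b. c *\<^sub>R Phi_proj k b) b \<noteq> 0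
      \<and> norm (gram_schmidt (\<lambda>b. c *\<^sub>R Phi_proj k b) b - Phi b k) \<le> 8 ^ b * \<delta>"
    using gram_schmidt_perturbation[OF _ _ less_imp_le[OF \<delta>_pos] \<delta>_small b] by simp
  then show ?thesis using gram_schmidt_scaleR[OF c, of "Phi_proj k" b] c by (auto simp: Psi_def)
qed

lemma frame_distance_Psi: "sqrt (\<Sum>a=1..m. (norm (Phi a k - Psi a k))\<^sup>2) \<le> (real m + 1) * 8 ^ m * \<delta>"
proof -
  have "(norm (Phi a k - Psi a k))\<^sup>2 \<le> (8 ^ m * \<delta>)\<^sup>2" if a: "a \<in> {1..m}" for a
  proof -
    have "norm (Phi a k - Psi a k) \<le> 8 ^ a * \<delta>" using Psi_close a by (simp add: norm_minus_commute)
    also have "\<dots> \<le> 8 ^ m * \<delta>" using a \<delta>_pos by (intro mult_right_mono power_increasing) auto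
    finally show ?thesis by (intro power_mono) auto
  qed
  then have "(\<Sum>a=1..m. (norm (Phi a k - Psi a k))\<^sup>2) \<le> real m * (8 ^ m * \<delta>)\<^sup>2"
    using sum_mono[of "{1..m}" "\<lambda>a. (norm (Phi a k - Psi a k))\<^sup>2" "\<lambda>_. (8 ^ m * \<delta>)\<^sup>2"] by simp
  also have "\<dots> \<le> (real m + 1)\<^sup>2 * (8 ^ m * \<delta>)\<^sup>2"
    by (intro mult_right_mono zero_le_power2) (simp add: power2_eq_square algebra_simps)
  also have "\<dots> = ((real m + 1) * 8 ^ m * \<delta>)\<^sup>2"
    by (simp add: power_mult_distrib)
  finally show ?thesis using real_sqrt_le_mono \<delta>_pos by fastforce
qed

lemma Psi_onb_frame: "is_onb_frame P m Psi k"
proof -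
  have on: "\<forall>a\<in>{1..m}. \<forall>b\<in>{1..m}. cinner (Psi a k) (Psi b k) = (if a = b then 1 else 0)"
    unfolding Psi_def using gram_schmidt_orthonormal Psi_close by blast
  have "P k (Psi a k) = Psi a k" for a
    unfolding Psi_def by (rule gram_schmidt_fixpoint[OF clinear_P]) (simp add: Phi_proj_def P_idem)
  then have "\<forall>a\<in>{1..m}. Psi a k \<in> range (blinfun_apply (P k))" by (metis rangeI)
  then have "cspan ((\<lambda>a. Psi a k) ` {1..m}) = range (blinfun_apply (P k))"
    using proj on by (intro orthonormal_family_cspan_eq) auto
  then show ?thesis unfolding is_onb_frame_def using on by blast
qed

lemma smooth_fun_grid_weight: "smooth_fun (\<lambda>k. grid_weight k n)"
proof -
  have "linear (\<lambda>k. real N * lattice_coords k $ i)" for i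
    unfolding lattice_coords_def
    by (rule linearI) (simp_all add: matrix_vector_right_distrib matrix_vector_mult_scaleR algebra_simps)
  then have "bounded_linear (\<lambda>k. real N * lattice_coords k $ i)" for i
    by (simp add: linear_conv_bounded_linear)
  then show ?thesis
    unfolding grid_weight_def
    by (intro smooth_fun_prod smooth_fun_bump smooth_fun_diff smooth_fun_bounded_linear smooth_fun_const) auto
qed

text \<open>Near \<open>k\<^sub>0\<close> only finitely many grid indices carry weight, so \<open>Phi_avg b\<close> is locally a finite sum
of smooth functions.\<close>

lemma smooth_fun_Phi_avg: "smooth_fun (Phi_avg b)"
proof (rule smooth_fun_local)
  fix k\<^sub>0 :: "real^'d"
  have "isCont (\<lambda>k. real N *\<^sub>R lattice_coords k) k\<^sub>0"
    unfolding lattice_coords_def by (intro continuous_intros linear_continuous_at matrix_vector_mul_bounded_linear)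
  then obtain \<rho> where \<rho>: "0 < \<rho>" "\<And>k. dist k k\<^sub>0 < \<rho> \<Longrightarrow> dist (real N *\<^sub>R lattice_coords k) (real N *\<^sub>R lattice_coords k\<^sub>0) < 1"
    unfolding continuous_at_eps_delta by (metis zero_less_one)
  define T where "T = {n::'d \<Rightarrow> int. \<forall>i. n i \<in> {\<lfloor>real N * lattice_coords k\<^sub>0 $ i\<rfloor> - 2 .. \<lfloor>real N * lattice_coords k\<^sub>0 $ i\<rfloor> + 2}}"
  have T: "finite T" unfolding T_def by (rule finite_int_box)
  have sub: "grid_support k \<subseteq> T" if k: "k \<in> ball k\<^sub>0 \<rho>" for k
  proof
    fix n assume n: "n \<in> grid_support k"
    have h1: "\<bar>real N * lattice_coords k $ i - real N * lattice_coords k\<^sub>0 $ i\<bar> < 1" for i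
      using \<rho>(2)[of k] k component_le_norm_cart[of "real N *\<^sub>R lattice_coords k - real N *\<^sub>R lattice_coords k\<^sub>0" i]
      by (simp add: dist_norm norm_minus_commute)
    have h2: "\<bar>real N * lattice_coords k $ i - real_of_int (n i)\<bar> < 1" for i
      using n unfolding grid_support_iff by blast
    have "\<bar>real N * lattice_coords k\<^sub>0 $ i - real_of_int (n i)\<bar> < 2" for i
      using h1[of i] h2[of i] by linarith
    then show "n \<in> T" unfolding T_def using abs_diff_of_int_less_imp_floor_box[where j=2] by simp
  qed
  define g where "g = (\<lambda>k. \<Sum>n\<in>T. grid_weight k n *\<^sub>R Phi b (grid_point n))"
  have "smooth_fun g" unfolding g_def
    by (intro smooth_fun_sum smooth_fun_scaleR smooth_fun_grid_weight smooth_fun_const T)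
  moreover have "Phi_avg b k = g k" if "k \<in> ball k\<^sub>0 \<rho>" for k
    unfolding Phi_avg_def g_def
    by (rule sum.mono_neutral_left[OF T sub[OF that]]) (auto simp: grid_support_def)
  ultimately show "\<exists>U g. open U \<and> k\<^sub>0 \<in> U \<and> smooth_fun g \<and> (\<forall>k\<in>U. Phi_avg b k = g k)"
    using \<rho>(1) by (intro exI[of _ "ball k\<^sub>0 \<rho>"] exI[of _ g]) auto
qed

lemma smooth_fun_Phi_proj: "smooth_fun (\<lambda>k. Phi_proj k b)"
proof (cases "b \<in> {1..m}")
  case True
  show ?thesis unfolding Phi_proj_def if_P[OF True]
    by (rule smooth_fun_bilinear[OF bounded_bilinear_blinfun_apply smooth_P smooth_fun_Phi_avg])
next
  case False
  show ?thesis unfolding Phi_proj_def if_not_P[OF False] by (rule smooth_fun_const)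
qed

text \<open>The Gram--Schmidt residuals never vanish, so the normalisation \<open>u \<mapsto> \<langle>u, u\<rangle>\<^sup>-\<^sup>1\<^sup>/\<^sup>2 u\<close> is smooth.\<close>

lemma smooth_fun_Psi: "a \<in> {1..m} \<Longrightarrow> smooth_fun (Psi a)"
proof (induction a rule: less_induct)
  case (less a)
  define u where "u = (\<lambda>k. gram_schmidt_residual (Phi_proj k) a)"
  have "smooth_fun (\<lambda>k. cinner (Psi c k) (Phi_proj k a) *\<^sub>C Psi c k)" if "c \<in> {1..<a}" for c
    using less that
    by (intro smooth_fun_bilinear[OF bounded_bilinear_scaleC] smooth_fun_bilinear[OF bounded_bilinear_cinner]
        smooth_fun_Phi_proj) auto
  then have su: "smooth_fun u"
    unfolding u_def gram_schmidt_residual_def Psi_def[symmetric]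
    by (intro smooth_fun_diff smooth_fun_sum smooth_fun_Phi_proj) auto
  have pos: "0 < inner (u k) (u k)" for k
    using Psi_close[OF less.prems] by (simp add: u_def)
  have "Psi a k = (inner (u k) (u k)) powr (-1/2) *\<^sub>R u k" for k
    using pos[of k] by (simp add: Psi_def gram_schmidt_eq_residual u_def norm_eq_sqrt_inner powr_half_sqrt
        powr_minus_divide)
  moreover have "smooth_fun (\<lambda>k. (inner (u k) (u k)) powr (-1/2) *\<^sub>R u k)"
    by (intro smooth_fun_scaleR smooth_fun_powr smooth_fun_bilinear[OF bounded_bilinear_inner] su pos)
  ultimately show ?case by (simp add: fun_eq_iff)
qed

end

lemma small_error_exists:
  assumes "0 < \<epsilon>"
  shows "\<exists>\<delta>>0. (8::real) ^ m * \<delta> \<le> 1 \<and> (real m + 1) * 8 ^ m * \<delta> < \<epsilon>"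
proof (intro exI conjI)
  define \<delta> where "\<delta> = min 1 (\<epsilon> / (2 * (real m + 1))) / 8 ^ m"
  show "0 < \<delta>" "8 ^ m * \<delta> \<le> 1" using assms by (simp_all add: \<delta>_def)
  have "(real m + 1) * 8 ^ m * \<delta> = (real m + 1) * min 1 (\<epsilon> / (2 * (real m + 1)))"
    by (simp add: \<delta>_def)
  also have "\<dots> \<le> (real m + 1) * (\<epsilon> / (2 * (real m + 1)))"
    by (intro mult_left_mono) auto
  also have "\<dots> = \<epsilon> / 2" by (simp add: field_simps)
  also have "\<dots> < \<epsilon>" using assms by simp
  finally show "(real m + 1) * 8 ^ m * \<delta> < \<epsilon>" .
qed

theorem mainTheorem3:
  fixes P :: "real^'d \<Rightarrow> ('h::{complex_inner_space, complete_space} \<Rightarrow>\<^sub>L 'h)"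
    and L :: "(real^'d) set"
    and tau :: "real^'d \<Rightarrow> 'h \<Rightarrow> 'h"
    and Theta :: "'h \<Rightarrow> 'h"
    and m :: nat
    and Phi :: "nat \<Rightarrow> real^'d \<Rightarrow> 'h"
  assumes sep: "separable_space TYPE('h)"
    and lat: "is_lattice L"
    and proj: "\<forall>k. orth_projector (P k) \<and> has_cdim (range (blinfun_apply (P k))) m"
    and P1: "smooth_fun P"
    and P2: "unitary_rep L tau"
    and P2': "\<forall>k. \<forall>l\<in>L. \<forall>x. P (k + l) x = tau l (P k (inv (tau l) x))"
    and P3: "antiunitary_op Theta"
    and P3': "\<forall>k x. P (- k) x = Theta (P k (inv Theta x))"
    and P3'': "Theta \<circ> Theta = id"
    and P4: "\<forall>l\<in>L. Theta \<circ> tau l = inv (tau l) \<circ> Theta"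
    and onb: "\<forall>k. is_onb_frame P m Phi k"
    and cont: "\<forall>a\<in>{1..m}. continuous_on UNIV (Phi a)"
    and equiv: "\<forall>a\<in>{1..m}. \<forall>k. \<forall>l\<in>L. Phi a (k + l) = tau l (Phi a k)"
    and trs: "\<forall>a\<in>{1..m}. \<forall>k. Phi a (- k) = Theta (Phi a k)"
  shows "\<forall>\<epsilon>>0. \<exists>Psi :: nat \<Rightarrow> real^'d \<Rightarrow> 'h.
           (\<forall>k. is_onb_frame P m Psi k)
         \<and> (\<forall>a\<in>{1..m}. \<forall>k. \<forall>l\<in>L. Psi a (k + l) = tau l (Psi a k))
         \<and> (\<forall>a\<in>{1..m}. \<forall>k. Psi a (- k) = Theta (Psi a k))
         \<and> (\<forall>a\<in>{1..m}. smooth_fun (Psi a))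
         \<and> (SUP k. sqrt (\<Sum>a=1..m. (norm (Phi a k - Psi a k))\<^sup>2)) < \<epsilon>"
proof (intro allI impI)
  fix \<epsilon> :: real assume "0 < \<epsilon>"
  interpret bloch_frame P L tau Theta m Phi
    using proj P1 P2 P2' P3 P3' onb equiv trs by unfold_locales
  obtain B :: "real^'d^'d" where "invertible B" and lattice: "L = range (\<lambda>n::'d \<Rightarrow> int. B *v (\<chi> i. real_of_int (n i)))"
    using lat unfolding is_lattice_def by blast
  then obtain Ai where BAi: "B ** Ai = mat 1" "Ai ** B = mat 1" unfolding invertible_def by blast
  obtain \<delta> where \<delta>: "0 < \<delta>" "8 ^ m * \<delta> \<le> 1" "(real m + 1) * 8 ^ m * \<delta> < \<epsilon>"
    using small_error_exists[OF \<open>0 < \<epsilon>\<close>] by blast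
  obtain r where r: "0 < r" "\<forall>a\<in>{1..m}. \<forall>k q. dist k q < r \<longrightarrow> norm (Phi a k - Phi a q) \<le> \<delta>"
    using Phi_uniform_modulus[OF lattice BAi(1) cont \<delta>(1)] by blast
  obtain N where N: "1 \<le> N" "\<forall>v. (\<forall>i. \<bar>v $ i\<bar> < 1 / real N) \<longrightarrow> norm (B *v v) < r"
    using fine_grid_exists[OF r(1), of B] by blast
  interpret G: grid_smoothing P L tau Theta m Phi B Ai N \<delta> r
    using BAi lattice N \<delta> r by unfold_locales auto
  have "(SUP k. sqrt (\<Sum>a=1..m. (norm (Phi a k - G.Psi a k))\<^sup>2)) \<le> (real m + 1) * 8 ^ m * \<delta>"
    by (rule cSUP_least[OF UNIV_not_empty G.frame_distance_Psi])
  then show "\<exists>Psi. (\<forall>k. is_onb_frame P m Psi k)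
         \<and> (\<forall>a\<in>{1..m}. \<forall>k. \<forall>l\<in>L. Psi a (k + l) = tau l (Psi a k))
         \<and> (\<forall>a\<in>{1..m}. \<forall>k. Psi a (- k) = Theta (Psi a k))
         \<and> (\<forall>a\<in>{1..m}. smooth_fun (Psi a))
         \<and> (SUP k. sqrt (\<Sum>a=1..m. (norm (Phi a k - Psi a k))\<^sup>2)) < \<epsilon>"
    using G.Psi_onb_frame G.Psi_shift G.Psi_minus G.smooth_fun_Psi \<delta>(3) by (intro exI[of _ G.Psi]) auto
qed

end
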